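(* Let $K$ be a global function field, fix a prime $\infty$ of $K$, let $\mathcal{O}$ be the ring of elements of $K$ regular at every prime other than $\infty$, and let $\mathbb{F}_q$ be the full constant field of $K$ (so $\mathcal{O}^*=\mathbb{F}_q^*$). Let $\phi\in\mathcal{O}[X]$ be a polynomial of degree $d\geqslant2$ with leading coefficient in $\mathcal{O}^*$. Then $\#\mathrm{Per}(\phi,K)\leqslant\min\{d,q\}$ unless one of the following holds: (a) $\phi$ is conjugate over $K$ to a polynomial with coefficients in $\mathbb{F}_q$, in which case $\#\mathrm{PrePer}(\phi,K)=q$; (b) $\mathrm{Per}(\phi,K)=\mathrm{Fix}(\phi,K)$, in which case $\#\mathrm{Per}(\phi,K)\leqslant d$; (c) $\mathrm{Per}(\phi,K)$ is the union of at least two cycles of the same length $n>1$ and at most one fixed point.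
   Context: A global function field is a finite extension of $\mathbb{F}_p(t)$; its full constant field is the algebraic closure of $\mathbb{F}_p$ in $K$. $\phi$ is viewed as a map $K\to K$. $\mathrm{Per}(\phi,K)$, $\mathrm{Fix}(\phi,K)$, $\mathrm{PrePer}(\phi,K)$ denote respectively the periodic points ($\phi^n(x)=x$ for some $n\geqslant1$), fixed points, and preperiodic points (points with finite forward orbit) of $\phi$ in $K$. "Conjugate over $K$ to $\psi$" means $\psi=\eta\circ\phi\circ\eta^{-1}$ for some invertible change of coordinates $\eta$ defined over $K$. *)

theory Defs
  imports "HOL-Computational_Algebra.Computational_Algebra"
begin

text \<open>The field K is the whole type 'k.  Its prime subfield.\<close>
definition prime_subfield :: "'k::field set" where
  "prime_subfield = {of_int a / of_int b | a b. of_int b \<noteq> (0::'k)}"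

definition poly_over :: "'k::field set \<Rightarrow> 'k poly \<Rightarrow> bool" where
  "poly_over F p \<longleftrightarrow> (\<forall>i. coeff p i \<in> F)"

definition algebraic_over :: "'k::field set \<Rightarrow> 'k \<Rightarrow> bool" where
  "algebraic_over F x \<longleftrightarrow> (\<exists>p. p \<noteq> 0 \<and> poly_over F p \<and> poly p x = 0)"

definition rat_fun_field :: "'k::field set \<Rightarrow> 'k \<Rightarrow> 'k set" where
  "rat_fun_field F t = {poly a t / poly b t | a b. poly_over F a \<and> poly_over F b \<and> poly b t \<noteq> 0}"

definition finite_dim_over :: "'k::field set \<Rightarrow> bool" where
  "finite_dim_over L \<longleftrightarrow>
     (\<exists>B::'k set. finite B \<and> (\<forall>x. \<exists>c. (\<forall>b\<in>B. c b \<in> L) \<and> x = (\<Sum>b\<in>B. c b * b)))"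

definition global_function_field :: "'k::field itself \<Rightarrow> bool" where
  "global_function_field _ \<longleftrightarrow>
     (\<exists>p::nat. prime p \<and> of_nat p = (0::'k)) \<and>
     (\<exists>t::'k. \<not> algebraic_over prime_subfield t \<and> finite_dim_over (rat_fun_field prime_subfield t))"

definition constant_field :: "'k::field set" where
  "constant_field = {x. algebraic_over prime_subfield x}"

text \<open>Primes of K, represented by their normalized discrete valuations
  v : K* \<rightarrow> Z (surjective); by convention v 0 = 0 (the value at 0 is a junk value).\<close>
definition dval :: "('k::field \<Rightarrow> int) \<Rightarrow> bool" where
  "dval v \<longleftrightarrow> v 0 = 0 \<and>
     (\<forall>x y. x \<noteq> 0 \<longrightarrow> y \<noteq> 0 \<longrightarrow> v (x * y) = v x + v y) \<and>
     (\<forall>x y. x \<noteq> 0 \<longrightarrow> y \<noteq> 0 \<longrightarrow> x + y \<noteq> 0 \<longrightarrow> min (v x) (v y) \<le> v (x + y)) \<and>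
     (\<forall>n. \<exists>x. x \<noteq> 0 \<and> v x = n)"

definition ring_O :: "('k::field \<Rightarrow> int) \<Rightarrow> 'k set" where
  "ring_O vinf = {x. \<forall>v. dval v \<and> v \<noteq> vinf \<longrightarrow> x = 0 \<or> 0 \<le> v x}"

definition Per :: "('a \<Rightarrow> 'a) \<Rightarrow> 'a set" where
  "Per f = {x. \<exists>n\<ge>1. (f ^^ n) x = x}"

definition Fix :: "('a \<Rightarrow> 'a) \<Rightarrow> 'a set" where
  "Fix f = {x. f x = x}"

definition PrePer :: "('a \<Rightarrow> 'a) \<Rightarrow> 'a set" where
  "PrePer f = {x. finite {(f ^^ n) x | n. True}}"

definition exact_period :: "('a \<Rightarrow> 'a) \<Rightarrow> nat \<Rightarrow> 'a \<Rightarrow> bool" where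
  "exact_period f n x \<longleftrightarrow> n \<ge> 1 \<and> (f ^^ n) x = x \<and> (\<forall>m. 1 \<le> m \<and> m < n \<longrightarrow> (f ^^ m) x \<noteq> x)"

text \<open>phi is conjugate over K, by an affine change of coordinates eta(x) = a x + b,
  to a polynomial psi with coefficients in F.\<close>
definition conj_to_poly_over :: "'k::field set \<Rightarrow> 'k poly \<Rightarrow> bool" where
  "conj_to_poly_over F \<phi> \<longleftrightarrow>
     (\<exists>a b \<psi>. a \<noteq> 0 \<and> poly_over F \<psi> \<and> (\<forall>x. poly \<psi> x = a * poly \<phi> ((x - b) / a) + b))"

definition two_cycles_condition :: "('a \<Rightarrow> 'a) \<Rightarrow> bool" where
  "two_cycles_condition f \<longleftrightarrow>
     (\<exists>n>1. (\<forall>x\<in>Per f. x \<in> Fix f \<or> exact_period f n x) \<and>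
            (\<forall>x\<in>Fix f. \<forall>y\<in>Fix f. x = y) \<and>
            (\<exists>x y. exact_period f n x \<and> exact_period f n y \<and> y \<notin> {(f ^^ m) x | m. True}))"

end

theory Submission
  imports Defs
begin

text \<open>
  Periodic points of \<open>\<phi>\<close> are integral at every prime other than \<open>\<infinity>\<close>: at a pole the
  valuation of the iterates is multiplied by \<open>d\<close> at each step, so the orbit is infinite.
  For periodic points \<open>x \<noteq> y\<close> the quotients \<open>(\<phi>\<^sup>k x - \<phi>\<^sup>k y) / (x - y)\<close> and their inverses
  therefore lie in \<open>\<O>\<close>, so they are nonzero constants, as \<open>\<O>\<^sup>* = \<bbbF>\<^sub>q\<^sup>*\<close>.  Hence the cycle of a
  non-fixed periodic point \<open>a\<close> lies on the affine line \<open>a + \<bbbF>\<^sub>q (\<phi> a - a)\<close>, and so does every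
  periodic point whose period does not kill \<open>a\<close>.  Two such lines sharing two points coincide;
  applied to a point \<open>a\<close> of maximal period this shows that, unless \<open>Per = Fix\<close> or
  \<open>Per\<close> consists of several \<open>n\<close>-cycles and at most one fixed point, all periodic points lie on
  one line.  So there are at most \<open>q\<close> of them, and if there were more than \<open>d\<close>, the
  interpolation polynomial of \<open>\<phi>\<close> on the line would be a conjugate of \<open>\<phi>\<close> over \<open>\<bbbF>\<^sub>q\<close>.

  The arithmetic input -- \<open>\<bbbF>\<^sub>q\<close> is a finite field and consists exactly of the elements
  without poles -- is derived from the definitions: a transcendental element lies in the
  maximal ideal of some valuation ring (Chevalley), and finiteness of \<open>K\<close> over \<open>\<bbbF>\<^sub>p(t)\<close>
  makes that valuation ring discrete.
\<close>

definition subring :: "'k::field set \<Rightarrow> bool" where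
  "subring R \<longleftrightarrow> 0 \<in> R \<and> 1 \<in> R \<and> (\<forall>x\<in>R. \<forall>y\<in>R. x + y \<in> R \<and> x * y \<in> R) \<and> (\<forall>x\<in>R. - x \<in> R)"

definition subfield :: "'k::field set \<Rightarrow> bool" where
  "subfield L \<longleftrightarrow> subring L \<and> (\<forall>x\<in>L. inverse x \<in> L)"

lemma subringD:
  assumes "subring R"
  shows "0 \<in> R" "1 \<in> R" "x \<in> R \<Longrightarrow> y \<in> R \<Longrightarrow> x + y \<in> R"
    "x \<in> R \<Longrightarrow> y \<in> R \<Longrightarrow> x * y \<in> R" "x \<in> R \<Longrightarrow> - x \<in> R"
    "x \<in> R \<Longrightarrow> y \<in> R \<Longrightarrow> x - y \<in> R"
proof -
  show "0 \<in> R" "1 \<in> R" "x \<in> R \<Longrightarrow> y \<in> R \<Longrightarrow> x + y \<in> R"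
    "x \<in> R \<Longrightarrow> y \<in> R \<Longrightarrow> x * y \<in> R" "x \<in> R \<Longrightarrow> - x \<in> R"
    using assms unfolding subring_def by auto
  show "x \<in> R \<Longrightarrow> y \<in> R \<Longrightarrow> x - y \<in> R"
    using assms unfolding subring_def by (metis diff_conv_add_uminus)
qed

lemma subfieldD:
  assumes "subfield L"
  shows "subring L" "x \<in> L \<Longrightarrow> inverse x \<in> L" "x \<in> L \<Longrightarrow> y \<in> L \<Longrightarrow> x / y \<in> L"
  using assms subringD[of L] unfolding subfield_def by (auto simp: divide_inverse)

lemma subring_sum:
  assumes "subring R" "\<And>i. i \<in> I \<Longrightarrow> f i \<in> R"
  shows "sum f I \<in> R"
  using assms(2)
  by (induction I rule: infinite_finite_induct) (auto intro: subringD[OF assms(1)])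

lemma subring_power:
  assumes "subring R" "x \<in> R" shows "x ^ n \<in> R"
  by (induction n) (auto intro: subringD[OF assms(1)] assms(2))

lemma subring_poly:
  assumes "subring R" "poly_over R f" "s \<in> R"
  shows "poly f s \<in> R"
  unfolding poly_altdef using assms
  by (intro subring_sum) (auto intro!: subringD(4)[OF assms(1)] subring_power simp: poly_over_def)

lemma poly_over_0 [simp]: "subring R \<Longrightarrow> poly_over R 0"
  by (simp add: poly_over_def subringD)

lemma poly_over_const: "subring R \<Longrightarrow> c \<in> R \<Longrightarrow> poly_over R [:c:]"
  by (auto simp: poly_over_def coeff_pCons subringD split: nat.split)

lemma poly_over_1: "subring R \<Longrightarrow> poly_over R 1"
  using poly_over_const[of R 1] subringD(2)[of R] by (simp add: one_pCons)

lemma poly_over_pCons: "subring R \<Longrightarrow> c \<in> R \<Longrightarrow> poly_over R p \<Longrightarrow> poly_over R (pCons c p)"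
  by (auto simp: poly_over_def coeff_pCons split: nat.split)

lemma poly_over_X: "subring R \<Longrightarrow> poly_over R [:0, 1:]"
  using poly_over_pCons[of R 0 "[:1:]"] poly_over_1[of R] subringD(1)[of R] by (simp add: one_pCons)

lemma poly_over_monom: "subring R \<Longrightarrow> c \<in> R \<Longrightarrow> poly_over R (monom c n)"
  by (auto simp: poly_over_def coeff_monom subringD)

lemma poly_over_add: "subring R \<Longrightarrow> poly_over R p \<Longrightarrow> poly_over R q \<Longrightarrow> poly_over R (p + q)"
  by (auto simp: poly_over_def intro: subringD)

lemma poly_over_uminus: "subring R \<Longrightarrow> poly_over R p \<Longrightarrow> poly_over R (- p)"
  by (auto simp: poly_over_def intro: subringD)

lemma poly_over_diff: "subring R \<Longrightarrow> poly_over R p \<Longrightarrow> poly_over R q \<Longrightarrow> poly_over R (p - q)"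
  by (auto simp: poly_over_def intro: subringD)

lemma poly_over_smult: "subring R \<Longrightarrow> c \<in> R \<Longrightarrow> poly_over R p \<Longrightarrow> poly_over R (smult c p)"
  by (auto simp: poly_over_def intro: subringD)

lemma poly_over_mult: "subring R \<Longrightarrow> poly_over R p \<Longrightarrow> poly_over R q \<Longrightarrow> poly_over R (p * q)"
  unfolding poly_over_def coeff_mult by (auto intro!: subring_sum subringD(4))

lemma poly_over_prod:
  "subring R \<Longrightarrow> (\<And>i. i \<in> I \<Longrightarrow> poly_over R (f i)) \<Longrightarrow> poly_over R (prod f I)"
  by (induction I rule: infinite_finite_induct) (auto intro: poly_over_mult simp: poly_over_1)

lemma poly_over_sum:
  "subring R \<Longrightarrow> (\<And>i. i \<in> I \<Longrightarrow> poly_over R (f i)) \<Longrightarrow> poly_over R (sum f I)"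
  by (induction I rule: infinite_finite_induct) (auto intro: poly_over_add)

lemma poly_over_reflect: "subring R \<Longrightarrow> poly_over R p \<Longrightarrow> poly_over R (reflect_poly p)"
  unfolding poly_over_def by (auto simp: coeff_reflect_poly subringD)

lemma poly_over_mono: "poly_over R p \<Longrightarrow> R \<subseteq> S \<Longrightarrow> poly_over S p"
  by (auto simp: poly_over_def)

lemma poly_over_lead_cancel:
  assumes F: "subfield F" and \<pi>: "poly_over F \<pi>" "\<pi> \<noteq> 0"
    and g: "poly_over F g" "degree \<pi> \<le> degree g"
  defines "m \<equiv> monom (lead_coeff g / lead_coeff \<pi>) (degree g - degree \<pi>)"
  shows "poly_over F m" "g - m * \<pi> = 0 \<or> degree (g - m * \<pi>) < degree g"
proof -
  have "lead_coeff g / lead_coeff \<pi> \<in> F" using g(1) \<pi>(1) subfieldD(3)[OF F] unfolding poly_over_def by blast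
  then show "poly_over F m" unfolding m_def by (rule poly_over_monom[OF subfieldD(1)[OF F]])
  have "degree (m * \<pi>) \<le> degree g"
    using degree_mult_le[of m \<pi>] degree_monom_le[of "lead_coeff g / lead_coeff \<pi>" "degree g - degree \<pi>"] g(2)
    unfolding m_def by linarith
  moreover have "coeff (g - m * \<pi>) (degree g) = 0"
    unfolding m_def using g(2) \<pi>(2) by (simp add: coeff_monom_mult)
  ultimately show "g - m * \<pi> = 0 \<or> degree (g - m * \<pi>) < degree g"
    using degree_less_if_less_eqI[of "g - m * \<pi>" g] degree_diff_le[of g "degree g" "m * \<pi>"] by auto
qed

lemma poly_divmod_over:
  assumes F: "subfield F" and \<pi>: "poly_over F \<pi>" "\<pi> \<noteq> 0" and g: "poly_over F g"
  shows "\<exists>q r. poly_over F q \<and> poly_over F r \<and> g = \<pi> * q + r \<and> (r = 0 \<or> degree r < degree \<pi>)"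
  using g
proof (induction "degree g" arbitrary: g rule: less_induct)
  case (less g)
  have FR: "subring F" using subfieldD(1)[OF F] .
  show ?case
  proof (cases "g = 0 \<or> degree g < degree \<pi>")
    case True
    then show ?thesis using less(2) poly_over_0[OF FR] by (intro exI[of _ 0] exI[of _ g]) auto
  next
    case False
    define m where "m = monom (lead_coeff g / lead_coeff \<pi>) (degree g - degree \<pi>)"
    have m: "poly_over F m" "g - m * \<pi> = 0 \<or> degree (g - m * \<pi>) < degree g"
      using poly_over_lead_cancel[OF F \<pi> less(2)] False unfolding m_def by auto
    have g': "poly_over F (g - m * \<pi>)" by (intro poly_over_diff[OF FR] poly_over_mult[OF FR] less(2) m(1) \<pi>(1))
    obtain q r where qr: "poly_over F q" "poly_over F r" "g - m * \<pi> = \<pi> * q + r" "r = 0 \<or> degree r < degree \<pi>"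
    proof (cases "g - m * \<pi> = 0")
      case True
      then show ?thesis using that[of 0 0] poly_over_0[OF FR] by simp
    next
      case False
      then show ?thesis using less(1)[OF _ g'] m(2) that by blast
    qed
    have "g = \<pi> * (q + m) + r" using qr(3) by (simp add: algebra_simps)
    then show ?thesis using qr poly_over_add[OF FR qr(1) m(1)] by blast
  qed
qed

lemma poly_over_interpolation:
  assumes C: "subfield C" and Z: "finite Z" "Z \<subseteq> C" and g: "\<And>z. z \<in> Z \<Longrightarrow> g z \<in> C"
  shows "\<exists>h. poly_over C h \<and> (h = 0 \<or> degree h < card Z) \<and> (\<forall>z\<in>Z. poly h z = g z)"
  using Z g
proof (induction Z rule: finite_induct)
  case empty
  then show ?case using poly_over_0[OF subfieldD(1)[OF C]] by (intro exI[of _ 0]) simp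
next
  case (insert z0 Z)
  have CR: "subring C" using subfieldD(1)[OF C] .
  obtain h0 where h0: "poly_over C h0" "h0 = 0 \<or> degree h0 < card Z" "\<forall>z\<in>Z. poly h0 z = g z"
    using insert by auto
  have dh0: "degree h0 \<le> card Z" using h0(2) by auto
  define P where "P = (\<Prod>z\<in>Z. [:- z, 1:])"
  have PC: "poly_over C P" unfolding P_def using insert(4)
    by (intro poly_over_prod[OF CR] poly_over_pCons[OF CR] subringD(5)[OF CR] poly_over_const[OF CR] subringD(2)[OF CR]) auto
  have Pz: "poly P z = 0" if "z \<in> Z" for z unfolding P_def using insert(1) that by (simp add: poly_prod)
  have Pz0: "poly P z0 \<noteq> 0" unfolding P_def using insert(1,2) by (simp add: poly_prod)
  have dP: "degree P \<le> card Z"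
  proof -
    have "degree P \<le> sum (degree \<circ> (\<lambda>z. [:- z, 1:])) Z" unfolding P_def using insert(1) by (rule degree_prod_sum_le)
    also have "\<dots> = card Z" by simp
    finally show ?thesis .
  qed
  define c where "c = (g z0 - poly h0 z0) / poly P z0"
  have cC: "c \<in> C" unfolding c_def using insert(4,5) h0(1) PC
    by (intro subfieldD(3)[OF C] subringD(6)[OF CR] subring_poly[OF CR]) auto
  define h where "h = h0 + smult c P"
  have hC: "poly_over C h" unfolding h_def by (intro poly_over_add[OF CR] h0(1) poly_over_smult[OF CR cC PC])
  have dh: "degree h \<le> card Z"
    unfolding h_def using degree_add_le[of h0 "card Z" "smult c P"] dh0 dP degree_smult_le[of c P] by linarith
  have card: "card (insert z0 Z) = Suc (card Z)" using insert(1,2) by simp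
  have vals: "\<forall>z\<in>insert z0 Z. poly h z = g z"
    unfolding h_def using h0(3) Pz Pz0 by (auto simp: c_def)
  show ?case using hC dh card vals by (intro exI[of _ h]) simp
qed

lemma poly_diff_factor:
  assumes R: "subring R" and cf: "\<And>i. coeff p i \<in> R" and ab: "a \<in> R" "b \<in> R"
  shows "\<exists>H\<in>R. poly p a - poly p b = (a - b) * H"
proof -
  define H where "H = (\<Sum>i\<le>degree p. coeff p i * (\<Sum>j<i. b ^ (i - Suc j) * a ^ j))"
  have "poly p a - poly p b = (\<Sum>i\<le>degree p. coeff p i * (a ^ i - b ^ i))"
    by (simp add: poly_altdef sum_subtractf algebra_simps)
  also have "\<dots> = (a - b) * H" unfolding H_def
    by (simp add: power_diff_sumr2 sum_distrib_left algebra_simps)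
  finally have "poly p a - poly p b = (a - b) * H" .
  moreover have "H \<in> R" unfolding H_def using cf ab
    by (intro subring_sum[OF R] subringD(4)[OF R] subring_power[OF R]) auto
  ultimately show ?thesis by blast
qed

lemma dvalD:
  assumes "dval v"
  shows "v 0 = 0" "x \<noteq> 0 \<Longrightarrow> y \<noteq> 0 \<Longrightarrow> v (x * y) = v x + v y"
    "x \<noteq> 0 \<Longrightarrow> y \<noteq> 0 \<Longrightarrow> x + y \<noteq> 0 \<Longrightarrow> min (v x) (v y) \<le> v (x + y)"
    "\<exists>x. x \<noteq> 0 \<and> v x = n"
  using assms unfolding dval_def by auto

lemma dval_1: "dval v \<Longrightarrow> v 1 = 0"
  using dvalD(2)[of v 1 1] by simp

lemma dval_inverse: "dval v \<Longrightarrow> x \<noteq> 0 \<Longrightarrow> v (inverse x) = - v x"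
  using dvalD(2)[of v x "inverse x"] dval_1[of v] by simp

lemma dval_uminus: "dval v \<Longrightarrow> v (- x) = v x"
proof -
  assume v: "dval v"
  have "v (-1) = 0" using dvalD(2)[OF v, of "-1" "-1"] dval_1[OF v] by simp
  then show ?thesis using dvalD(2)[OF v, of "-1" x] by (cases "x = 0") (auto simp: dvalD(1)[OF v])
qed

lemma dval_power: "dval v \<Longrightarrow> x \<noteq> 0 \<Longrightarrow> v (x ^ n) = int n * v x"
  by (induction n) (auto simp: dval_1 dvalD(2) algebra_simps)

lemma dval_diff: "dval v \<Longrightarrow> x \<noteq> 0 \<Longrightarrow> y \<noteq> 0 \<Longrightarrow> x - y \<noteq> 0 \<Longrightarrow> min (v x) (v y) \<le> v (x - y)"
  using dvalD(3)[of v x "- y"] dval_uminus[of v y] by simp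

lemma dval_sum_gt:
  assumes "dval v" "\<And>i. i \<in> I \<Longrightarrow> a i = 0 \<or> v (a i) > c"
  shows "sum a I = 0 \<or> v (sum a I) > c"
  using assms(2)
proof (induction I rule: infinite_finite_induct)
  case (insert i I)
  then have hi: "a i = 0 \<or> v (a i) > c" and hI: "sum a I = 0 \<or> v (sum a I) > c" by auto
  show ?case
  proof (cases "a i = 0 \<or> sum a I = 0 \<or> a i + sum a I = 0")
    case False
    then have "min (v (a i)) (v (sum a I)) \<le> v (a i + sum a I)"
      by (intro dvalD(3)[OF assms(1)]) auto
    then show ?thesis using hi hI False insert(1,2) by auto
  qed (use hi hI insert(1,2) in auto)
qed simp_all

lemma dval_sum_strict_min:
  assumes "dval v" "finite I" "j \<in> I" "a j \<noteq> 0"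
    "\<And>i. i \<in> I \<Longrightarrow> i \<noteq> j \<Longrightarrow> a i = 0 \<or> v (a i) > v (a j)"
  shows "sum a I \<noteq> 0 \<and> v (sum a I) = v (a j)"
proof -
  define S where "S = sum a (I - {j})"
  have sumeq: "sum a I = a j + S"
    unfolding S_def using assms(2,3) by (simp add: sum.remove)
  have hS: "S = 0 \<or> v S > v (a j)"
    unfolding S_def by (rule dval_sum_gt[OF assms(1)]) (use assms(5) in auto)
  show ?thesis
  proof (cases "S = 0")
    case True then show ?thesis using sumeq assms(4) by simp
  next
    case False
    then have vS: "v S > v (a j)" using hS by auto
    have ne: "a j + S \<noteq> 0"
    proof
      assume "a j + S = 0"
      then have "S = - a j" by (simp add: add_eq_0_iff2)
      then show False using vS dval_uminus[OF assms(1)] by simp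
    qed
    have "min (v (a j)) (v S) \<le> v (a j + S)"
      using dvalD(3)[OF assms(1) assms(4) False ne] .
    moreover have "min (v (a j + S)) (v S) \<le> v (a j)"
      using dval_diff[OF assms(1) ne False] assms(4) by (metis add_diff_cancel_right')
    ultimately show ?thesis using vS ne sumeq by auto
  qed
qed

lemma dval_poly_at_pole:
  assumes v: "dval v" and cf: "\<And>i. coeff f i = 0 \<or> v (coeff f i) \<ge> 0"
    and lc: "lead_coeff f \<noteq> 0" "v (lead_coeff f) = 0" and w: "w \<noteq> 0" "v w < 0"
  shows "poly f w \<noteq> 0 \<and> v (poly f w) = int (degree f) * v w"
proof -
  define a where "a i = coeff f i * w ^ i" for i
  have psum: "poly f w = (\<Sum>i\<le>degree f. a i)" unfolding a_def by (rule poly_altdef)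
  have va: "v (a i) = v (coeff f i) + int i * v w" if "coeff f i \<noteq> 0" for i
    unfolding a_def using dvalD(2)[OF v that, of "w ^ i"] dval_power[OF v w(1)] w(1) by simp
  have aj: "a (degree f) \<noteq> 0" "v (a (degree f)) = int (degree f) * v w"
    using lc va[OF lc(1)] w(1) unfolding a_def by auto
  have "(\<Sum>i\<le>degree f. a i) \<noteq> 0 \<and> v (\<Sum>i\<le>degree f. a i) = v (a (degree f))"
  proof (rule dval_sum_strict_min[OF v])
    show "finite {..degree f}" by simp
    show "degree f \<in> {..degree f}" by simp
    show "a (degree f) \<noteq> 0" using aj(1) .
    fix i assume i: "i \<in> {..degree f}" "i \<noteq> degree f"
    show "a i = 0 \<or> v (a (degree f)) < v (a i)"
    proof (cases "coeff f i = 0")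
      case True then show ?thesis unfolding a_def by simp
    next
      case False
      have "i < degree f" using i by simp
      then have "int (degree f) * v w < int i * v w" using w(2) by (simp add: mult_strict_right_mono_neg)
      moreover have "v (coeff f i) \<ge> 0" using cf[of i] False by simp
      ultimately show ?thesis using va[OF False] aj(2) by simp
    qed
  qed
  then show ?thesis using psum aj(2) by simp
qed

lemma subring_dval_nonneg:
  fixes P :: "('k::field \<Rightarrow> int) \<Rightarrow> bool"
  assumes P: "\<And>v. P v \<Longrightarrow> dval v"
  shows "subring {x. \<forall>v. P v \<longrightarrow> x = 0 \<or> 0 \<le> v x}" (is "subring ?R")
proof -
  have add: "x + y \<in> ?R" if "x \<in> ?R" "y \<in> ?R" for x y
  proof (intro CollectI allI impI)
    fix v assume v: "P v"
    show "x + y = 0 \<or> 0 \<le> v (x + y)"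
    proof (cases "x = 0 \<or> y = 0 \<or> x + y = 0")
      case False
      then show ?thesis using dvalD(3)[OF P[OF v], of x y] that v by force
    qed (use that v in auto)
  qed
  have mul: "x * y \<in> ?R" if "x \<in> ?R" "y \<in> ?R" for x y
  proof (intro CollectI allI impI)
    fix v assume v: "P v"
    show "x * y = 0 \<or> 0 \<le> v (x * y)"
    proof (cases "x = 0 \<or> y = 0")
      case False
      then show ?thesis using dvalD(2)[OF P[OF v], of x y] that v by force
    qed auto
  qed
  have "- x \<in> ?R" if "x \<in> ?R" for x
  proof (intro CollectI allI impI)
    fix v assume "P v"
    then show "- x = 0 \<or> 0 \<le> v (- x)" using that dval_uminus[OF P[OF \<open>P v\<close>], of x] by auto
  qed
  moreover have "1 \<in> ?R"
  proof (intro CollectI allI impI)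
    fix v assume "P v"
    then show "1 = 0 \<or> 0 \<le> v 1" using dval_1[OF P[OF \<open>P v\<close>]] by simp
  qed
  ultimately show ?thesis unfolding subring_def using add mul by simp
qed

lemma of_int_in_prime_subfield: "of_int a \<in> (prime_subfield :: 'k::field set)"
  unfolding prime_subfield_def by (rule CollectI, rule exI[of _ a], rule exI[of _ 1]) simp

lemma prime_subfieldE:
  fixes x :: "'k::field"
  assumes "x \<in> prime_subfield"
  obtains a b where "x = of_int a / of_int b" "of_int b \<noteq> (0::'k)"
  using assms unfolding prime_subfield_def by blast

lemma prime_subfieldI: "of_int b \<noteq> (0::'k::field) \<Longrightarrow> of_int a / of_int b \<in> (prime_subfield :: 'k set)"
  unfolding prime_subfield_def by blast

lemma subfield_prime_subfield: "subfield (prime_subfield :: 'k::field set)"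
  unfolding subfield_def subring_def
proof (intro conjI ballI)
  show "0 \<in> (prime_subfield :: 'k set)" "1 \<in> (prime_subfield :: 'k set)"
    using of_int_in_prime_subfield[of 0] of_int_in_prime_subfield[of 1] by simp_all
next
  fix x y :: 'k assume "x \<in> prime_subfield" "y \<in> prime_subfield"
  then obtain a b c d where x: "x = of_int a / of_int b" "of_int b \<noteq> (0::'k)"
    and y: "y = of_int c / of_int d" "of_int d \<noteq> (0::'k)" by (elim prime_subfieldE)
  have sum: "x + y = of_int (a * d + c * b) / of_int (b * d)"
    and prod: "x * y = of_int (a * c) / of_int (b * d)"
    using x y by (simp_all add: field_simps)
  have "of_int (b * d) \<noteq> (0::'k)" using x y by simp
  then show "x + y \<in> prime_subfield" "x * y \<in> prime_subfield"
    unfolding sum prod by (rule prime_subfieldI)+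
next
  fix x :: 'k assume "x \<in> prime_subfield"
  then obtain a b where x: "x = of_int a / of_int b" "of_int b \<noteq> (0::'k)" by (elim prime_subfieldE)
  have "- x = of_int (- a) / of_int b" using x by simp
  then show "- x \<in> prime_subfield" using prime_subfieldI[OF x(2)] by metis
  show "inverse x \<in> prime_subfield"
  proof (cases "of_int a = (0::'k)")
    case True
    then show ?thesis using x of_int_in_prime_subfield[of 0] by simp
  next
    case False
    then show ?thesis using x prime_subfieldI[OF False, of b] by simp
  qed
qed

lemma subring_prime_subfield: "subring (prime_subfield :: 'k::field set)"
  using subfield_prime_subfield subfieldD(1) by blast

lemma finite_prime_subfield:
  assumes "of_nat p = (0::'k::field)" "p > 0"
  shows "finite (prime_subfield :: 'k set)"
proof -
  have modeq: "(of_int a :: 'k) = of_int (a mod int p)" for a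
  proof -
    have "a = int p * (a div int p) + a mod int p" by simp
    then have "(of_int a :: 'k) = of_int (int p) * of_int (a div int p) + of_int (a mod int p)"
      by (metis of_int_add of_int_mult)
    then show ?thesis using assms(1) by simp
  qed
  have "prime_subfield \<subseteq> (\<lambda>(i, j). (of_int i / of_int j :: 'k)) ` ({0..<int p} \<times> {0..<int p})"
  proof
    fix x :: 'k assume "x \<in> prime_subfield"
    then obtain a b where x: "x = of_int a / of_int b" unfolding prime_subfield_def by blast
    then have "x = of_int (a mod int p) / of_int (b mod int p)" by (simp add: modeq[of a] modeq[of b])
    moreover have "(a mod int p, b mod int p) \<in> {0..<int p} \<times> {0..<int p}" using assms(2) by simp
    ultimately show "x \<in> (\<lambda>(i, j). (of_int i / of_int j :: 'k)) ` ({0..<int p} \<times> {0..<int p})"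
      by (metis (no_types, lifting) case_prod_conv image_eqI)
  qed
  then show ?thesis by (rule finite_subset) simp
qed

definition in_span :: "'k::field set \<Rightarrow> 'k set \<Rightarrow> 'k \<Rightarrow> bool" where
  "in_span L B z \<longleftrightarrow> (\<exists>c. (\<forall>b\<in>B. c b \<in> L) \<and> z = (\<Sum>b\<in>B. c b * b))"

lemma in_span_insert:
  assumes "finite B" "b \<notin> B" "in_span L (insert b B) z"
  shows "\<exists>\<alpha> w. \<alpha> \<in> L \<and> in_span L B w \<and> z = \<alpha> * b + w"
proof -
  obtain c where c: "\<forall>x\<in>insert b B. c x \<in> L" "z = (\<Sum>x\<in>insert b B. c x * x)"
    using assms(3) unfolding in_span_def by blast
  have "z = c b * b + (\<Sum>x\<in>B. c x * x)" using c(2) assms(1,2) by simp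
  moreover have "in_span L B (\<Sum>x\<in>B. c x * x)" unfolding in_span_def using c(1) by blast
  ultimately show ?thesis using c(1) by blast
qed

lemma in_span_comb:
  assumes "subfield L" "finite B" "in_span L B z1" "in_span L B z2" "\<gamma> \<in> L"
  shows "in_span L B (z1 - \<gamma> * z2)"
proof -
  obtain c1 where c1: "\<forall>x\<in>B. c1 x \<in> L" "z1 = (\<Sum>x\<in>B. c1 x * x)" using assms(3) unfolding in_span_def by blast
  obtain c2 where c2: "\<forall>x\<in>B. c2 x \<in> L" "z2 = (\<Sum>x\<in>B. c2 x * x)" using assms(4) unfolding in_span_def by blast
  have "z1 - \<gamma> * z2 = (\<Sum>x\<in>B. (c1 x - \<gamma> * c2 x) * x)"
    unfolding c1(2) c2(2) by (simp add: sum_distrib_left sum_subtractf algebra_simps)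
  moreover have "\<forall>x\<in>B. c1 x - \<gamma> * c2 x \<in> L"
  proof
    fix x assume "x \<in> B"
    have R: "subring L" using subfieldD(1)[OF assms(1)] .
    show "c1 x - \<gamma> * c2 x \<in> L"
      by (rule subringD(6)[OF R]) (use c1(1) c2(1) assms(5) \<open>x \<in> B\<close> subringD(4)[OF R] in auto)
  qed
  ultimately show ?thesis unfolding in_span_def by (intro exI[of _ "\<lambda>x. c1 x - \<gamma> * c2 x"]) simp
qed

text \<open>Gaussian elimination step: a relation among the \<open>z\<^sub>i - (\<alpha>\<^sub>i/\<alpha>\<^sub>j) z\<^sub>j\<close> lifts to one among the
  \<open>y\<^sub>i = \<alpha>\<^sub>i b + z\<^sub>i\<close>.\<close>
lemma pivot_sum_eq:
  fixes y z \<alpha> c :: "'i \<Rightarrow> 'k::field"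
  assumes I: "finite I" "j \<in> I" "\<alpha> j \<noteq> 0" and y: "\<And>i. i \<in> I \<Longrightarrow> y i = \<alpha> i * b + z i"
  defines "A \<equiv> (\<Sum>i\<in>I - {j}. c i * \<alpha> i)"
  shows "(\<Sum>i\<in>I. (if i = j then - (A / \<alpha> j) else c i) * y i)
    = (\<Sum>i\<in>I - {j}. c i * (z i - (\<alpha> i / \<alpha> j) * z j))"
proof -
  define S where "S = (\<Sum>i\<in>I - {j}. c i * z i)"
  have "(\<Sum>i\<in>I - {j}. c i * y i) = (\<Sum>i\<in>I - {j}. c i * \<alpha> i * b + c i * z i)"
    using y by (intro sum.cong) (auto simp: algebra_simps)
  also have "\<dots> = A * b + S"
    unfolding A_def S_def by (simp add: sum.distrib sum_distrib_right)
  finally have "(\<Sum>i\<in>I. (if i = j then - (A / \<alpha> j) else c i) * y i) = - (A / \<alpha> j) * y j + (A * b + S)"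
    using I(1,2) by (simp add: sum.remove)
  also have "\<dots> = S - A * (z j / \<alpha> j)" using y[OF I(2)] I(3) by (simp add: field_simps)
  also have "\<dots> = (\<Sum>i\<in>I - {j}. c i * (z i - (\<alpha> i / \<alpha> j) * z j))"
    unfolding A_def S_def sum_distrib_right sum_subtractf[symmetric] by (intro sum.cong) (auto simp: algebra_simps)
  finally show ?thesis .
qed

lemma in_span_dependent:
  assumes "subfield L" "finite B"
  shows "finite I \<Longrightarrow> card I > card B \<Longrightarrow> (\<forall>i\<in>I. in_span L B (y i)) \<Longrightarrow>
     \<exists>c. (\<forall>i\<in>I. c i \<in> L) \<and> (\<exists>i\<in>I. c i \<noteq> 0) \<and> (\<Sum>i\<in>I. c i * y i) = 0"
  using assms(2)
proof (induction B arbitrary: I y rule: finite_induct)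
  case empty
  then obtain i0 where i0: "i0 \<in> I" by (metis card.empty card_gt_0_iff equals0I)
  have y0: "y i = 0" if "i \<in> I" for i using empty(3) that unfolding in_span_def by simp
  define c where "c = (\<lambda>i. if i = i0 then (1::'a) else 0)"
  have "(\<Sum>i\<in>I. c i * y i) = 0" using y0 by (simp add: c_def)
  moreover have "\<forall>i\<in>I. c i \<in> L" using subringD[OF subfieldD(1)[OF assms(1)]] by (simp add: c_def)
  moreover have "c i0 \<noteq> 0" by (simp add: c_def)
  ultimately show ?case using i0 by blast
next
  case (insert b B)
  have "\<forall>i\<in>I. \<exists>\<alpha> w. \<alpha> \<in> L \<and> in_span L B w \<and> y i = \<alpha> * b + w"
    using insert(1,2,6) in_span_insert by blast
  then obtain \<alpha> z where az: "\<And>i. i \<in> I \<Longrightarrow> \<alpha> i \<in> L \<and> in_span L B (z i) \<and> y i = \<alpha> i * b + z i"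
    by metis
  have cardB: "card (insert b B) = Suc (card B)" using insert(1,2) by simp
  show ?case
  proof (cases "\<forall>i\<in>I. \<alpha> i = 0")
    case True
    then have "\<forall>i\<in>I. in_span L B (y i)" using az by auto
    moreover have "card I > card B" using insert(5) cardB by simp
    ultimately show ?thesis using insert(3)[OF insert(4)] by blast
  next
    case False
    then obtain j where j: "j \<in> I" "\<alpha> j \<noteq> 0" by blast
    define I' where "I' = I - {j}"
    define y' where "y' = (\<lambda>i. z i - (\<alpha> i / \<alpha> j) * z j)"
    have fI': "finite I'" using insert(4) by (simp add: I'_def)
    have cI': "card I' > card B" using insert(5) cardB j(1) insert(4) by (simp add: I'_def)
    have "\<forall>i\<in>I'. in_span L B (y' i)"
    proof
      fix i assume "i \<in> I'"
      then have "i \<in> I" by (simp add: I'_def)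
      show "in_span L B (y' i)" unfolding y'_def
        by (rule in_span_comb[OF assms(1) insert(1)]) (use az[OF \<open>i \<in> I\<close>] az[OF j(1)] in \<open>auto intro!: subfieldD(3)[OF assms(1)]\<close>)
    qed
    then obtain c' where c': "\<forall>i\<in>I'. c' i \<in> L" "\<exists>i\<in>I'. c' i \<noteq> 0" "(\<Sum>i\<in>I'. c' i * y' i) = 0"
      using insert(3)[OF fI' cI'] by blast
    define A where "A = (\<Sum>i\<in>I'. c' i * \<alpha> i)"
    define c where "c = (\<lambda>i. if i = j then - (A / \<alpha> j) else c' i)"
    have AL: "A \<in> L" unfolding A_def using c'(1) az I'_def
      by (auto intro!: subring_sum subringD(4) subfieldD(1)[OF assms(1)])
    have cL: "\<forall>i\<in>I. c i \<in> L" unfolding c_def using c'(1) AL az j I'_def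
      by (auto intro!: subringD(5)[OF subfieldD(1)[OF assms(1)]] subfieldD(3)[OF assms(1)])
    have cnz: "\<exists>i\<in>I. c i \<noteq> 0" using c'(2) unfolding c_def I'_def by auto
    have "y i = \<alpha> i * b + z i" if "i \<in> I" for i using az[OF that] by blast
    then have "(\<Sum>i\<in>I. c i * y i) = (\<Sum>i\<in>I'. c' i * y' i)"
      unfolding c_def A_def I'_def y'_def by (rule pivot_sum_eq[where \<alpha> = \<alpha> and j = j, OF insert(4) j])
    then show ?thesis using c'(3) cL cnz by auto
  qed
qed

lemma finite_dim_powers_dependent:
  assumes "subfield L" "finite_dim_over L"
  obtains N where "\<And>y. \<exists>c. (\<forall>i\<le>N. c i \<in> L) \<and> (\<exists>i\<le>N. c i \<noteq> 0) \<and> (\<Sum>i\<le>N. c i * y ^ i) = 0"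
proof -
  obtain B where B: "finite B" "\<And>x. \<exists>c. (\<forall>b\<in>B. c b \<in> L) \<and> x = (\<Sum>b\<in>B. c b * b)"
    using assms(2) unfolding finite_dim_over_def by blast
  have "\<exists>c. (\<forall>i\<le>card B. c i \<in> L) \<and> (\<exists>i\<le>card B. c i \<noteq> 0) \<and> (\<Sum>i\<le>card B. c i * y ^ i) = 0" for y
  proof -
    have sp: "\<forall>i\<in>{..card B}. in_span L B (y ^ i)" using B(2) unfolding in_span_def by blast
    have "card {..card B} > card B" by simp
    from in_span_dependent[OF assms(1) B(1) _ this sp] show ?thesis by (simp add: Ball_def Bex_def)
  qed
  then show ?thesis using that by blast
qed

section \<open>Valuation rings\<close>

definition adjoin :: "'k::field set \<Rightarrow> 'k \<Rightarrow> 'k set" where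
  "adjoin F s = {poly f s | f. poly_over F f}"

lemma adjoin_const: "subring F \<Longrightarrow> c \<in> F \<Longrightarrow> c \<in> adjoin F s"
  unfolding adjoin_def using poly_over_const[of F c] by (metis (mono_tags, lifting) CollectI poly_const_conv)

lemma adjoin_var: "subring F \<Longrightarrow> s \<in> adjoin F s"
  unfolding adjoin_def using poly_over_X[of F] by force

lemma subring_adjoin:
  assumes "subring F" shows "subring (adjoin F s)"
  unfolding subring_def
proof (intro conjI ballI)
  show "0 \<in> adjoin F s" "1 \<in> adjoin F s" using adjoin_const[OF assms] subringD[OF assms] by auto
next
  fix a b assume "a \<in> adjoin F s" "b \<in> adjoin F s"
  then obtain f g where fg: "poly_over F f" "poly_over F g" "a = poly f s" "b = poly g s"
    unfolding adjoin_def by blast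
  have "a + b = poly (f + g) s" "a * b = poly (f * g) s" using fg(3,4) by simp_all
  then show "a + b \<in> adjoin F s" "a * b \<in> adjoin F s"
    unfolding adjoin_def using poly_over_add[OF assms fg(1,2)] poly_over_mult[OF assms fg(1,2)] by blast+
next
  fix a assume "a \<in> adjoin F s"
  then obtain f where f: "poly_over F f" "a = poly f s" unfolding adjoin_def by blast
  then have "- a = poly (- f) s" by simp
  then show "- a \<in> adjoin F s" unfolding adjoin_def using poly_over_uminus[OF assms f(1)] by blast
qed

definition valuation_ring :: "'k::field set \<Rightarrow> bool" where
  "valuation_ring V \<longleftrightarrow> subring V \<and> (\<forall>y. y \<noteq> 0 \<longrightarrow> y \<in> V \<or> inverse y \<in> V)"

lemma not_algebraic_poly:
  "\<not> algebraic_over F x \<Longrightarrow> poly_over F f \<Longrightarrow> f \<noteq> 0 \<Longrightarrow> poly f x \<noteq> 0"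
  unfolding algebraic_over_def by blast

lemma not_algebraic_nonzero: "subring F \<Longrightarrow> \<not> algebraic_over F x \<Longrightarrow> x \<noteq> 0"
  using not_algebraic_poly[of F x "[:0, 1:]"] poly_over_X[of F] by auto

text \<open>An ideal \<open>I\<close> of \<open>V\<close> inside the Jacobson radical: the setting of the key step of
  Chevalley's extension theorem.\<close>
locale jacobson_ideal =
  fixes V I :: "'k::field set"
  assumes subring: "subring V" and subset: "I \<subseteq> V"
    and zero: "0 \<in> I" and diff: "\<And>a b. a \<in> I \<Longrightarrow> b \<in> I \<Longrightarrow> a - b \<in> I"
    and mult: "\<And>a r. a \<in> I \<Longrightarrow> r \<in> V \<Longrightarrow> r * a \<in> I"
    and one: "1 \<notin> I"
    and inverse_one_minus: "\<And>b. b \<in> I \<Longrightarrow> inverse (1 - b) \<in> V"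
begin

lemma monic_relation_from_inverse:
  assumes y: "y \<noteq> 0" and g: "poly_over I g" "poly g (inverse y) = 1"
  shows "\<exists>H. poly H y = 0 \<and> coeff H (degree g) = 1 \<and> (\<forall>i<degree g. coeff H i \<in> I)
    \<and> (\<forall>i>degree g. coeff H i = 0)"
proof -
  define u where "u = inverse (1 - coeff g 0)"
  have g0: "coeff g 0 \<in> I" using g(1) unfolding poly_over_def by blast
  then have uV: "u \<in> V" unfolding u_def by (rule inverse_one_minus)
  have g0_ne: "1 - coeff g 0 \<noteq> 0" using g0 one by auto
  text \<open>The reflected polynomial takes the value \<open>y ^ degree g\<close> at \<open>y\<close>; dividing by
    \<open>1 - g(0)\<close> makes the difference monic.\<close>
  define H where "H = smult u (monom 1 (degree g) - reflect_poly g)"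
  have "poly (reflect_poly g) y = y ^ degree g"
    using poly_reflect_poly_nz[OF y, of g] g(2) by simp
  then have "poly H y = 0" unfolding H_def by (simp add: poly_monom)
  moreover have "coeff H (degree g) = 1"
    unfolding H_def using g0_ne by (simp add: coeff_reflect_poly u_def)
  moreover have "coeff H i \<in> I" if "i < degree g" for i
  proof -
    have "coeff H i = u * (- coeff g (degree g - i))"
      unfolding H_def using that by (simp add: coeff_reflect_poly coeff_monom)
    moreover have "- coeff g (degree g - i) \<in> I" using g(1) diff[OF zero] unfolding poly_over_def by force
    ultimately show ?thesis using mult[OF _ uV] by metis
  qed
  moreover have "coeff H i = 0" if "i > degree g" for i
    unfolding H_def using that by (simp add: coeff_reflect_poly coeff_monom)
  ultimately show ?thesis by blast
qed

lemma degree_reduction: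
  assumes y: "y \<noteq> 0"
    and f: "poly_over I f" "poly f y = 1"
    and g: "poly_over I g" "poly g (inverse y) = 1"
    and deg: "degree g \<le> degree f"
  shows "\<exists>f'. poly_over I f' \<and> poly f' y = 1 \<and> degree f' < degree f"
proof -
  define n where "n = degree f"
  define k where "k = degree g"
  obtain H where H: "poly H y = 0" "coeff H k = 1" "\<And>i. i < k \<Longrightarrow> coeff H i \<in> I"
    "\<And>i. i > k \<Longrightarrow> coeff H i = 0"
    using monic_relation_from_inverse[OF y g] unfolding k_def by blast
  have HV: "coeff H i \<in> V" for i
  proof (cases i k rule: linorder_cases)
    case less then show ?thesis using H(3) subset by blast
  qed (use H(2,4) subringD(1,2)[OF subring] in simp_all)
  define M where "M = monom 1 (n - k) * H"
  have coeff_M: "coeff M i = (if i < n - k then 0 else coeff H (i - (n - k)))" for i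
    unfolding M_def by (simp add: coeff_monom_mult)
  define f' where "f' = f - smult (lead_coeff f) M"
  have "poly f' y = 1" unfolding f'_def M_def using f(2) H(1) by simp
  moreover have "poly_over I f'"
    unfolding poly_over_def
  proof
    fix i
    have "coeff f i \<in> I" "lead_coeff f \<in> I" using f(1) unfolding poly_over_def by blast+
    moreover have "lead_coeff f * coeff M i \<in> I"
      unfolding coeff_M using zero mult[OF _ HV] \<open>lead_coeff f \<in> I\<close> by (simp add: mult.commute)
    ultimately show "coeff f' i \<in> I" unfolding f'_def by (simp add: diff)
  qed
  moreover have "degree f' < degree f"
  proof (rule degree_less_if_less_eqI)
    show "f' \<noteq> 0" using \<open>poly f' y = 1\<close> by auto
    have "degree M \<le> n" using H(4) deg unfolding n_def k_def by (intro degree_le) (auto simp: coeff_M n_def k_def)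
    then show "degree f' \<le> degree f" unfolding f'_def n_def
      by (intro degree_diff_le) (auto intro: order.trans[OF degree_smult_le])
    show "coeff f' (degree f) = 0" unfolding f'_def coeff_diff coeff_smult coeff_M
      using H(2) deg by (simp add: n_def k_def)
  qed
  ultimately show ?thesis by blast
qed

lemma not_poly_eq_one_both:
  assumes y: "y \<noteq> 0" and f: "poly_over I f" "poly f y = 1"
  shows "\<not> (\<exists>g. poly_over I g \<and> poly g (inverse y) = 1)"
proof
  assume "\<exists>g. poly_over I g \<and> poly g (inverse y) = 1"
  then obtain g where g: "poly_over I g" "poly g (inverse y) = 1" by blast
  have "False" if "poly_over I f" "poly f y = 1" "poly_over I g" "poly g (inverse y) = 1"
    "degree f + degree g = m" for f g m
    using that
  proof (induction m arbitrary: f g rule: less_induct)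
    case (less m)
    show False
    proof (cases "degree g \<le> degree f")
      case True
      then obtain f' where "poly_over I f'" "poly f' y = 1" "degree f' < degree f"
        using degree_reduction[OF y] less.prems by blast
      then show False using less.IH[of "degree f' + degree g" f' g] less.prems by auto
    next
      case False
      obtain g' where "poly_over I g'" "poly g' (inverse y) = 1" "degree g' < degree g"
        using degree_reduction[of "inverse y" g f] y less.prems False by auto
      then show False using less.IH[of "degree f + degree g'" f g'] less.prems by auto
    qed
  qed
  then show False using f g by blast
qed

end

text \<open>Chevalley: among the subrings containing \<open>F\<close> and \<open>x\<close> in which \<open>x\<close> is not a unit, a maximal
  one is a valuation ring.\<close>
definition nonunit_subring :: "'k::field set \<Rightarrow> 'k \<Rightarrow> 'k set \<Rightarrow> bool" where
  "nonunit_subring F x R \<longleftrightarrow> subring R \<and> F \<subseteq> R \<and> x \<in> R \<and> (\<forall>r\<in>R. x * r \<noteq> 1)"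

lemma nonunit_subring_adjoin:
  assumes F: "subring F" and x: "\<not> algebraic_over F x"
  shows "nonunit_subring F x (adjoin F x)"
  unfolding nonunit_subring_def
proof (intro conjI ballI subsetI)
  fix r assume "r \<in> adjoin F x"
  then obtain f where f: "poly_over F f" "r = poly f x" unfolding adjoin_def by blast
  have "poly_over F (pCons 0 f - 1)"
    by (intro poly_over_diff[OF F] poly_over_pCons[OF F] subringD(1)[OF F] f(1) poly_over_1[OF F])
  moreover have "coeff (pCons 0 f - 1) 0 \<noteq> 0" by simp
  then have "pCons 0 f - 1 \<noteq> 0" by (metis coeff_0)
  ultimately have "poly (pCons 0 f - 1) x \<noteq> 0" by (rule not_algebraic_poly[OF x])
  then show "x * r \<noteq> 1" unfolding f(2) by simp
qed (use subring_adjoin[OF F] adjoin_const[OF F] adjoin_var[OF F] in auto)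

lemma nonunit_subring_chain_Union:
  assumes "\<C> \<noteq> {}" "subset.chain {R. nonunit_subring F x R} \<C>"
  shows "nonunit_subring F x (\<Union>\<C>)"
proof -
  have CA: "\<And>R. R \<in> \<C> \<Longrightarrow> nonunit_subring F x R"
    and chain: "\<And>X Y. X \<in> \<C> \<Longrightarrow> Y \<in> \<C> \<Longrightarrow> X \<subseteq> Y \<or> Y \<subseteq> X"
    using assms(2) unfolding subset.chain_def by auto
  obtain R1 where R1: "R1 \<in> \<C>" using assms(1) by blast
  have sub: "subring R" if "R \<in> \<C>" for R using CA[OF that] unfolding nonunit_subring_def by blast
  have two: "\<exists>R\<in>\<C>. a \<in> R \<and> b \<in> R" if "a \<in> \<Union>\<C>" "b \<in> \<Union>\<C>" for a b
    using that chain by blast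
  have "subring (\<Union>\<C>)"
    unfolding subring_def
  proof (intro conjI ballI)
    show "0 \<in> \<Union>\<C>" "1 \<in> \<Union>\<C>" using R1 sub subringD by blast+
  next
    fix a b assume "a \<in> \<Union>\<C>" "b \<in> \<Union>\<C>"
    then obtain R where "R \<in> \<C>" "a \<in> R" "b \<in> R" using two by blast
    then show "a + b \<in> \<Union>\<C>" "a * b \<in> \<Union>\<C>" using sub subringD by blast+
  next
    fix a assume "a \<in> \<Union>\<C>"
    then show "- a \<in> \<Union>\<C>" using sub subringD by blast
  qed
  then show ?thesis using R1 CA unfolding nonunit_subring_def by blast
qed

lemma maximal_nonunit_subring_exists:
  assumes "subring F" "\<not> algebraic_over F x"
  obtains V where "nonunit_subring F x V" "\<And>W. nonunit_subring F x W \<Longrightarrow> V \<subseteq> W \<Longrightarrow> W = V"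
proof -
  have "\<exists>V\<in>{R. nonunit_subring F x R}. \<forall>W\<in>{R. nonunit_subring F x R}. V \<subseteq> W \<longrightarrow> W = V"
    using nonunit_subring_adjoin[OF assms] nonunit_subring_chain_Union
    by (intro subset_Zorn_nonempty) blast+
  then show ?thesis using that by blast
qed

lemma subring_localize_one_minus:
  assumes R: "subring V" "x \<in> V" "\<And>c. c \<in> V \<Longrightarrow> x * c \<noteq> 1"
  shows "subring {r / (1 - x * c) | r c. r \<in> V \<and> c \<in> V}" (is "subring ?V'")
  unfolding subring_def
proof (intro conjI ballI)
  have den: "1 - x * c \<noteq> 0" if "c \<in> V" for c using R(3)[OF that] by simp
  have mem: "r / (1 - x * c) \<in> ?V'" if "r \<in> V" "c \<in> V" for r c using that by blast
  show "0 \<in> ?V'" "1 \<in> ?V'" using mem[of 0 0] mem[of 1 0] subringD(1,2)[OF R(1)] by simp_all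
  have prod_den: "(1 - x * c1) * (1 - x * c2) = 1 - x * (c1 + c2 - x * c1 * c2)" for c1 c2
    by (simp add: algebra_simps)
  have cl: "c1 + c2 - x * c1 * c2 \<in> V" if "c1 \<in> V" "c2 \<in> V" for c1 c2
    by (intro subringD(6)[OF R(1)] subringD(3)[OF R(1)] subringD(4)[OF R(1)] that R(2))
  fix a b assume "a \<in> ?V'" "b \<in> ?V'"
  then obtain r1 c1 r2 c2 where h: "a = r1 / (1 - x * c1)" "b = r2 / (1 - x * c2)"
    "r1 \<in> V" "c1 \<in> V" "r2 \<in> V" "c2 \<in> V" by blast
  have d: "1 - x * c1 \<noteq> 0" "1 - x * c2 \<noteq> 0" using den h by auto
  have "a + b = (r1 * (1 - x * c2) + r2 * (1 - x * c1)) / (1 - x * (c1 + c2 - x * c1 * c2))"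
    unfolding h prod_den[symmetric] using d by (simp add: field_simps)
  moreover have "r1 * (1 - x * c2) + r2 * (1 - x * c1) \<in> V"
    by (intro subringD(6)[OF R(1)] subringD(3)[OF R(1)] subringD(4)[OF R(1)] h R(2) subringD(2)[OF R(1)])
  ultimately show "a + b \<in> ?V'" using mem[OF _ cl[OF h(4) h(6)]] by simp
  have "a * b = (r1 * r2) / (1 - x * (c1 + c2 - x * c1 * c2))"
    unfolding h prod_den[symmetric] using d by (simp add: field_simps)
  moreover have "r1 * r2 \<in> V" using h subringD(4)[OF R(1)] by blast
  ultimately show "a * b \<in> ?V'" using mem[OF _ cl[OF h(4) h(6)]] by simp
next
  fix a assume "a \<in> {r / (1 - x * c) | r c. r \<in> V \<and> c \<in> V}"
  then obtain r c where h: "a = r / (1 - x * c)" "r \<in> V" "c \<in> V" by blast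
  then have "- a = (- r) / (1 - x * c)" by simp
  then show "- a \<in> {r / (1 - x * c) | r c. r \<in> V \<and> c \<in> V}" using subringD(5)[OF R(1) h(2)] h(3) by blast
qed

lemma nonunit_subring_localize:
  assumes V: "nonunit_subring F x V"
  defines "V' \<equiv> {r / (1 - x * c) | r c. r \<in> V \<and> c \<in> V}"
  shows "nonunit_subring F x V'" "V \<subseteq> V'"
proof -
  have R: "subring V" "F \<subseteq> V" "x \<in> V" "\<And>r. r \<in> V \<Longrightarrow> x * r \<noteq> 1"
    using V unfolding nonunit_subring_def by blast+
  show VV': "V \<subseteq> V'"
  proof
    fix r assume "r \<in> V"
    then have "r = r / (1 - x * 0)" "r \<in> V \<and> 0 \<in> V" using subringD(1)[OF R(1)] by auto
    then show "r \<in> V'" unfolding V'_def by blast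
  qed
  have "x * a \<noteq> 1" if "a \<in> V'" for a
  proof
    obtain r c where h: "a = r / (1 - x * c)" "r \<in> V" "c \<in> V" using \<open>a \<in> V'\<close> unfolding V'_def by blast
    assume "x * a = 1"
    moreover have "1 - x * c \<noteq> 0" using R(4)[OF h(3)] by simp
    ultimately have "x * (r + c) = 1" using h(1) by (simp add: field_simps)
    then show False using R(4) subringD(3)[OF R(1) h(2,3)] by blast
  qed
  then show "nonunit_subring F x V'"
    using subring_localize_one_minus[OF R(1,3,4)] VV' R(2,3) unfolding nonunit_subring_def V'_def by blast
qed

context
  fixes F V :: "'k::field set" and x :: 'k
  assumes V: "nonunit_subring F x V"
    and maximal: "\<And>W. nonunit_subring F x W \<Longrightarrow> V \<subseteq> W \<Longrightarrow> W = V"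
begin

lemma maximal_nonunit_subring_jacobson: "jacobson_ideal V {x * r | r. r \<in> V}"
proof -
  have R: "subring V" "x \<in> V" "\<And>r. r \<in> V \<Longrightarrow> x * r \<noteq> 1"
    using V unfolding nonunit_subring_def by blast+
  show ?thesis
  proof
    show "subring V" by (rule R(1))
    show "{x * r | r. r \<in> V} \<subseteq> V" using subringD(4)[OF R(1) R(2)] by blast
    show "0 \<in> {x * r | r. r \<in> V}" using subringD(1)[OF R(1)] by force
    show "1 \<notin> {x * r | r. r \<in> V}" using R(3) by force
  next
    fix a b assume "a \<in> {x * r | r. r \<in> V}" "b \<in> {x * r | r. r \<in> V}"
    then obtain r s where "a = x * r" "b = x * s" "r \<in> V" "s \<in> V" by blast
    then have "a - b = x * (r - s)" "r - s \<in> V" using subringD(6)[OF R(1)] by (auto simp: algebra_simps)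
    then show "a - b \<in> {x * r | r. r \<in> V}" by blast
  next
    fix a t assume "a \<in> {x * r | r. r \<in> V}" "t \<in> V"
    then obtain s where "a = x * s" "s \<in> V" by blast
    then have "t * a = x * (t * s)" "t * s \<in> V" using subringD(4)[OF R(1) \<open>t \<in> V\<close>] by (auto simp: algebra_simps)
    then show "t * a \<in> {x * r | r. r \<in> V}" by blast
  next
    fix b assume "b \<in> {x * r | r. r \<in> V}"
    then obtain c where c: "b = x * c" "c \<in> V" by blast
    let ?V' = "{r / (1 - x * c) | r c. r \<in> V \<and> c \<in> V}"
    have "?V' = V" using maximal nonunit_subring_localize[OF V] by blast
    moreover have "inverse (1 - x * c) \<in> ?V'"
      using c(2) subringD(2)[OF R(1)] by (metis (mono_tags, lifting) CollectI inverse_eq_divide)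
    ultimately show "inverse (1 - b) \<in> V" using c(1) by simp
  qed
qed

lemma maximal_nonunit_subring_outside:
  assumes y: "y \<notin> V"
  shows "\<exists>f. poly_over {x * r | r. r \<in> V} f \<and> poly f y = 1"
proof -
  have R: "subring V" "F \<subseteq> V" "x \<in> V" using V unfolding nonunit_subring_def by blast+
  have VW: "V \<subseteq> adjoin V y" using adjoin_const[OF R(1)] by blast
  have "adjoin V y \<noteq> V" using adjoin_var[OF R(1)] y by blast
  then have "\<not> nonunit_subring F x (adjoin V y)" using maximal VW by blast
  then obtain r where r: "r \<in> adjoin V y" "x * r = 1"
    unfolding nonunit_subring_def using subring_adjoin[OF R(1)] VW R(2,3) by blast
  then obtain g where g: "poly_over V g" "r = poly g y" unfolding adjoin_def by blast
  have "poly_over {x * r | r. r \<in> V} (smult x g)" using g(1) unfolding poly_over_def by auto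
  moreover have "poly (smult x g) y = 1" using r g by simp
  ultimately show ?thesis by blast
qed

lemma maximal_nonunit_subring_valuation_ring: "valuation_ring V"
  unfolding valuation_ring_def
proof (intro conjI allI impI)
  show "subring V" using V unfolding nonunit_subring_def by blast
next
  fix y :: 'k assume y: "y \<noteq> 0"
  show "y \<in> V \<or> inverse y \<in> V"
  proof (rule ccontr)
    assume "\<not> (y \<in> V \<or> inverse y \<in> V)"
    then show False
      using maximal_nonunit_subring_outside jacobson_ideal.not_poly_eq_one_both[OF
          maximal_nonunit_subring_jacobson y]
      by blast
  qed
qed

end

lemma valuation_ring_exists:
  assumes F: "subring F" and x: "\<not> algebraic_over F x"
  shows "\<exists>V. valuation_ring V \<and> F \<subseteq> V \<and> x \<in> V \<and> inverse x \<notin> V"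
proof -
  obtain V where V: "nonunit_subring F x V" "\<And>W. nonunit_subring F x W \<Longrightarrow> V \<subseteq> W \<Longrightarrow> W = V"
    using maximal_nonunit_subring_exists[OF F x] by blast
  have "inverse x \<notin> V" using V(1) not_algebraic_nonzero[OF F x]
    unfolding nonunit_subring_def by (metis right_inverse)
  then show ?thesis using maximal_nonunit_subring_valuation_ring[OF V] V(1)
    unfolding nonunit_subring_def by blast
qed

definition in_max_ideal :: "'k::field set \<Rightarrow> 'k \<Rightarrow> bool" where
  "in_max_ideal V z \<longleftrightarrow> z \<in> V \<and> (z = 0 \<or> inverse z \<notin> V)"

definition vr_unit :: "'k::field set \<Rightarrow> 'k \<Rightarrow> bool" where
  "vr_unit V u \<longleftrightarrow> u \<in> V \<and> u \<noteq> 0 \<and> inverse u \<in> V"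

context
  fixes V :: "'k::field set"
  assumes V: "valuation_ring V"
begin

lemma valuation_ring_subring: "subring V" using V unfolding valuation_ring_def by blast

lemma valuation_ring_notin: "z \<notin> V \<Longrightarrow> z \<noteq> 0 \<and> inverse z \<in> V \<and> in_max_ideal V (inverse z)"
proof -
  assume z: "z \<notin> V"
  then have z0: "z \<noteq> 0" using subringD(1)[OF valuation_ring_subring] by auto
  then have "inverse z \<in> V" using V z unfolding valuation_ring_def by blast
  then show ?thesis using z z0 unfolding in_max_ideal_def by simp
qed

lemma valuation_ring_cases: "z \<noteq> 0 \<Longrightarrow> z \<in> V \<or> inverse z \<in> V"
  using V unfolding valuation_ring_def by blast

lemma in_max_ideal_in: "in_max_ideal V z \<Longrightarrow> z \<in> V" unfolding in_max_ideal_def by blast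

lemma in_max_ideal_0: "in_max_ideal V 0" unfolding in_max_ideal_def using subringD(1)[OF valuation_ring_subring] by simp

lemma in_max_ideal_mult: "in_max_ideal V a \<Longrightarrow> r \<in> V \<Longrightarrow> in_max_ideal V (r * a)"
proof -
  assume a: "in_max_ideal V a" and r: "r \<in> V"
  have ra: "r * a \<in> V" using subringD(4)[OF valuation_ring_subring r in_max_ideal_in[OF a]] .
  show "in_max_ideal V (r * a)"
  proof (cases "r * a = 0")
    case True then show ?thesis using in_max_ideal_0 by (simp only: True)
  next
    case False
    then have "a \<noteq> 0" "r \<noteq> 0" by auto
    have "inverse (r * a) \<notin> V"
    proof
      assume "inverse (r * a) \<in> V"
      then have "r * inverse (r * a) \<in> V" using subringD(4)[OF valuation_ring_subring r] by blast
      moreover have "r * inverse (r * a) = inverse a" using \<open>r \<noteq> 0\<close> by (simp add: field_simps)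
      ultimately have "inverse a \<in> V" by metis
      then show False using a \<open>a \<noteq> 0\<close> unfolding in_max_ideal_def by simp
    qed
    then show ?thesis using ra unfolding in_max_ideal_def by blast
  qed
qed

lemma in_max_ideal_mult_right: "in_max_ideal V a \<Longrightarrow> r \<in> V \<Longrightarrow> in_max_ideal V (a * r)"
  using in_max_ideal_mult by (simp add: mult.commute)

lemma in_max_ideal_add: "in_max_ideal V a \<Longrightarrow> in_max_ideal V b \<Longrightarrow> in_max_ideal V (a + b)"
proof -
  assume a: "in_max_ideal V a" and b: "in_max_ideal V b"
  show ?thesis
  proof (cases "a = 0 \<or> b = 0")
    case True then show ?thesis using a b by auto
  next
    case False
    then have a0: "a \<noteq> 0" and b0: "b \<noteq> 0" by auto
    have "b / a \<noteq> 0" using False by simp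
    then consider "b / a \<in> V" | "inverse (b / a) \<in> V" using valuation_ring_cases by blast
    then show ?thesis
    proof cases
      case 1
      have "1 + b / a \<in> V" using subringD(3)[OF valuation_ring_subring subringD(2)[OF valuation_ring_subring] 1] .
      moreover have "a + b = a * (1 + b / a)" using a0 by (simp add: field_simps)
      ultimately show ?thesis using in_max_ideal_mult_right[OF a] by simp
    next
      case 2
      then have "a / b \<in> V" by simp
      then have "1 + a / b \<in> V" using subringD(3)[OF valuation_ring_subring subringD(2)[OF valuation_ring_subring]] by blast
      moreover have "a + b = b * (1 + a / b)" using b0 by (simp add: field_simps)
      ultimately show ?thesis using in_max_ideal_mult_right[OF b] by simp
    qed
  qed
qed

lemma in_max_ideal_uminus: "in_max_ideal V a \<Longrightarrow> in_max_ideal V (- a)"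
  using in_max_ideal_mult[of a "-1"] subringD(5)[OF valuation_ring_subring subringD(2)[OF valuation_ring_subring]] by simp

lemma in_max_ideal_diff: "in_max_ideal V a \<Longrightarrow> in_max_ideal V b \<Longrightarrow> in_max_ideal V (a - b)"
  using in_max_ideal_add[of a "- b"] in_max_ideal_uminus[of b] by simp

lemma in_max_ideal_sum: "(\<And>i. i \<in> A \<Longrightarrow> in_max_ideal V (f i)) \<Longrightarrow> in_max_ideal V (sum f A)"
proof (induction A rule: infinite_finite_induct)
  case (infinite A) then show ?case using in_max_ideal_0 by simp
next
  case empty then show ?case using in_max_ideal_0 by simp
next
  case (insert a A) then show ?case using in_max_ideal_add by simp
qed

lemma not_in_max_ideal_1: "\<not> in_max_ideal V 1"
  unfolding in_max_ideal_def using subringD(2)[OF valuation_ring_subring] by simp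

lemma in_max_ideal_power: "in_max_ideal V a \<Longrightarrow> k \<ge> 1 \<Longrightarrow> in_max_ideal V (a ^ k)"
proof (induction k)
  case 0 then show ?case by simp
next
  case (Suc k)
  show ?case
  proof (cases "k = 0")
    case True then show ?thesis using Suc by simp
  next
    case False
    then have "in_max_ideal V (a ^ k)" using Suc by simp
    then show ?thesis using in_max_ideal_mult[OF _ in_max_ideal_in[OF Suc(2)]] by simp
  qed
qed

lemma vr_unit_not_in_max_ideal: "vr_unit V u \<Longrightarrow> \<not> in_max_ideal V u"
  unfolding vr_unit_def in_max_ideal_def by auto

lemma vr_unitI: "z \<in> V \<Longrightarrow> z \<noteq> 0 \<Longrightarrow> \<not> in_max_ideal V z \<Longrightarrow> vr_unit V z"
  unfolding vr_unit_def in_max_ideal_def by auto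

lemma vr_unit_mult: "vr_unit V u \<Longrightarrow> vr_unit V u' \<Longrightarrow> vr_unit V (u * u')"
  unfolding vr_unit_def using subringD(4)[OF valuation_ring_subring] by (auto simp: mult.commute)

lemma vr_unit_inverse: "vr_unit V u \<Longrightarrow> vr_unit V (inverse u)"
  unfolding vr_unit_def by auto

lemma vr_unit_divide: "vr_unit V u \<Longrightarrow> vr_unit V u' \<Longrightarrow> vr_unit V (u / u')"
  using vr_unit_mult vr_unit_inverse by (simp add: divide_inverse)

lemma vr_unit_1: "vr_unit V 1" unfolding vr_unit_def using subringD(2)[OF valuation_ring_subring] by simp

lemma vr_unit_power: "vr_unit V u \<Longrightarrow> vr_unit V (u ^ n)"
proof (induction n)
  case 0 then show ?case using vr_unit_1 by simp
next
  case (Suc n) then show ?case using vr_unit_mult[of u "u ^ n"] by simp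
qed

lemma valuation_ring_min_ratio:
  assumes "finite A" "A \<noteq> {}" "\<And>i. i \<in> A \<Longrightarrow> f i \<noteq> 0"
  shows "\<exists>i0\<in>A. \<forall>i\<in>A. f i / f i0 \<in> V"
  using assms
proof (induction A rule: finite_ne_induct)
  case (singleton a)
  then show ?case using subringD(2)[OF valuation_ring_subring] by simp
next
  case (insert a A)
  then obtain i0 where i0: "i0 \<in> A" "\<forall>i\<in>A. f i / f i0 \<in> V" by auto
  have fa: "f a \<noteq> 0" "f i0 \<noteq> 0" using insert i0 by auto
  show ?case
  proof (cases "f a / f i0 \<in> V")
    case True then show ?thesis using i0 by auto
  next
    case False
    then have inv: "f i0 / f a \<in> V" using valuation_ring_notin[OF False] by simp
    have "\<forall>i\<in>insert a A. f i / f a \<in> V"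
    proof
      fix i assume "i \<in> insert a A"
      then consider "i = a" | "i \<in> A" by blast
      then show "f i / f a \<in> V"
      proof cases
        case 1 then show ?thesis using fa subringD(2)[OF valuation_ring_subring] by simp
      next
        case 2
        have eq: "f i / f a = (f i / f i0) * (f i0 / f a)" using fa by simp
        have "f i / f i0 \<in> V" using i0(2) 2 by blast
        then have "(f i / f i0) * (f i0 / f a) \<in> V" using subringD(4)[OF valuation_ring_subring _ inv] by blast
        then show ?thesis unfolding eq .
      qed
    qed
    then show ?thesis by blast
  qed
qed

lemma valuation_ring_sum_nonzero:
  assumes "finite A" "A \<noteq> {}" "\<And>i. i \<in> A \<Longrightarrow> f i \<noteq> 0"
    and "\<And>i j. i \<in> A \<Longrightarrow> j \<in> A \<Longrightarrow> i \<noteq> j \<Longrightarrow> \<not> vr_unit V (f i / f j)"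
  shows "sum f A \<noteq> 0"
proof
  assume s0: "sum f A = 0"
  have "\<exists>i0\<in>A. \<forall>i\<in>A. f i / f i0 \<in> V" by (rule valuation_ring_min_ratio[OF assms(1) assms(2) assms(3)])
  then obtain i0 where i0: "i0 \<in> A" "\<forall>i\<in>A. f i / f i0 \<in> V" by (elim bexE) simp
  have f0: "f i0 \<noteq> 0" using assms(3) i0(1) by blast
  have m: "in_max_ideal V (f i / f i0)" if "i \<in> A - {i0}" for i
  proof (rule ccontr)
    assume "\<not> in_max_ideal V (f i / f i0)"
    moreover have "f i / f i0 \<in> V" using i0(2) that by blast
    moreover have "f i / f i0 \<noteq> 0" using assms(3)[of i] that f0 by simp
    ultimately have "vr_unit V (f i / f i0)" using vr_unitI by blast
    moreover have "i \<in> A" "i \<noteq> i0" using that by auto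
    ultimately show False using assms(4)[of i i0] i0(1) by blast
  qed
  define S where "S = (\<Sum>i\<in>A - {i0}. f i / f i0)"
  have "sum f A / f i0 = (\<Sum>i\<in>A. f i / f i0)" by (rule sum_divide_distrib)
  also have "\<dots> = f i0 / f i0 + S"
    unfolding S_def using assms(1) i0(1) by (rule sum.remove)
  also have "f i0 / f i0 = 1" using f0 by simp
  finally have "1 + S = 0" using s0 by simp
  then have e: "- S = 1" by (simp add: add_eq_0_iff2)
  have "in_max_ideal V S" unfolding S_def by (rule in_max_ideal_sum[of "A - {i0}" "\<lambda>i. f i / f i0"]) (rule m)
  then have "in_max_ideal V (- S)" by (rule in_max_ideal_uminus)
  then have "in_max_ideal V 1" unfolding e .
  then show False using not_in_max_ideal_1 by blast
qed

end

lemma algebraic_inverse: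
  assumes "subring F" "algebraic_over F y" "y \<noteq> 0"
  shows "algebraic_over F (inverse y)"
proof -
  obtain f where f: "f \<noteq> 0" "poly_over F f" "poly f y = 0" using assms(2) unfolding algebraic_over_def by blast
  have "poly (reflect_poly f) (inverse y) = (inverse y) ^ degree f * poly f y"
    using poly_reflect_poly_nz[of "inverse y" f] assms(3) by simp
  then show ?thesis unfolding algebraic_over_def using f poly_over_reflect[OF assms(1) f(2)]
    by (intro exI[of _ "reflect_poly f"]) simp
qed

lemma rat_fun_field_mem:
  "poly_over F a \<Longrightarrow> poly_over F b \<Longrightarrow> poly b t \<noteq> 0 \<Longrightarrow> poly a t / poly b t \<in> rat_fun_field F t"
  unfolding rat_fun_field_def by blast

lemma rat_fun_fieldE:
  assumes "p \<in> rat_fun_field F t"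
  obtains a b where "poly_over F a" "poly_over F b" "poly b t \<noteq> 0" "p = poly a t / poly b t"
  using assms unfolding rat_fun_field_def by blast

lemma rat_fun_field_const: "subring F \<Longrightarrow> c \<in> F \<Longrightarrow> c \<in> rat_fun_field F t"
  using rat_fun_field_mem[of F "[:c:]" 1 t] poly_over_const[of F c] poly_over_1[of F] by simp

lemma subfield_rat_fun_field:
  assumes F: "subring F"
  shows "subfield (rat_fun_field F t)"
  unfolding subfield_def subring_def
proof (intro conjI ballI)
  show "0 \<in> rat_fun_field F t" "1 \<in> rat_fun_field F t" using rat_fun_field_const[OF F] subringD(1,2)[OF F] by auto
next
  fix p q assume "p \<in> rat_fun_field F t" "q \<in> rat_fun_field F t"
  then obtain a b c d where ab: "poly_over F a" "poly_over F b" "poly b t \<noteq> 0" "p = poly a t / poly b t"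
    and cd: "poly_over F c" "poly_over F d" "poly d t \<noteq> 0" "q = poly c t / poly d t"
    by (elim rat_fun_fieldE)
  have sum: "p + q = poly (a * d + c * b) t / poly (b * d) t"
    and prod: "p * q = poly (a * c) t / poly (b * d) t"
    unfolding ab(4) cd(4) using ab(3) cd(3) by (simp_all add: field_simps)
  show "p + q \<in> rat_fun_field F t" "p * q \<in> rat_fun_field F t" unfolding sum prod
    by (intro rat_fun_field_mem poly_over_add[OF F] poly_over_mult[OF F]; use ab cd in simp)+
next
  fix p assume "p \<in> rat_fun_field F t"
  then obtain a b where ab: "poly_over F a" "poly_over F b" "poly b t \<noteq> 0" "p = poly a t / poly b t"
    by (elim rat_fun_fieldE)
  have "- p = poly (- a) t / poly b t" using ab by simp
  then show "- p \<in> rat_fun_field F t" using rat_fun_field_mem[of F "- a" b t] ab poly_over_uminus[OF F] by simp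
  show "inverse p \<in> rat_fun_field F t"
  proof (cases "poly a t = 0")
    case True
    then show ?thesis using ab rat_fun_field_const[OF F subringD(1)[OF F]] by simp
  next
    case False
    then have "inverse p = poly b t / poly a t" using ab by simp
    then show ?thesis using rat_fun_field_mem[of F b a t] ab False by simp
  qed
qed

text \<open>A relation \<open>\<Sum> c\<^sub>i (1/x)\<^sup>i = 0\<close> over \<open>L\<close> is impossible if \<open>L \<subseteq> V\<close>: the coefficients are units
  of \<open>V\<close>, so the ratios of distinct terms are units times nonzero powers of \<open>x\<close>.\<close>
lemma finite_dim_subfield_not_subset:
  assumes V: "valuation_ring V" and L: "subfield L" "finite_dim_over L" and x: "x \<in> V" "inverse x \<notin> V"
  shows "\<not> L \<subseteq> V"
proof
  assume LV: "L \<subseteq> V"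
  obtain N where "\<And>y. \<exists>c. (\<forall>i\<le>N. c i \<in> L) \<and> (\<exists>i\<le>N. c i \<noteq> 0) \<and> (\<Sum>i\<le>N. c i * y ^ i) = 0"
    using finite_dim_powers_dependent[OF L] by blast
  then obtain c where c: "\<forall>i\<le>N. c i \<in> L" "\<exists>i\<le>N. c i \<noteq> 0" "(\<Sum>i\<le>N. c i * inverse x ^ i) = 0"
    by blast
  have x0: "x \<noteq> 0" using x by auto
  have xm: "in_max_ideal V x" using x unfolding in_max_ideal_def by simp
  define A where "A = {i. i \<le> N \<and> c i \<noteq> 0}"
  define T where "T i = c i * inverse x ^ i" for i
  have Af: "finite A" "A \<noteq> {}" unfolding A_def using c(2) by auto
  have T0: "T i \<noteq> 0" if "i \<in> A" for i using that x0 unfolding A_def T_def by simp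
  have "sum T A = (\<Sum>i\<le>N. c i * inverse x ^ i)" unfolding T_def A_def
    by (rule sum.mono_neutral_left) auto
  then have sum0: "sum T A = 0" using c(3) by simp
  have "\<not> vr_unit V (T i / T j)" if "i \<in> A" "j \<in> A" "i < j" for i j
  proof
    have "c i / c j \<in> V" using that c(1) subfieldD(3)[OF L(1)] LV unfolding A_def by auto
    then have "in_max_ideal V ((c i / c j) * x ^ (j - i))"
      using that(3) by (intro in_max_ideal_mult[OF V] in_max_ideal_power[OF V xm]) simp_all
    moreover have "x ^ j = x ^ (j - i) * x ^ i" using that(3) by (simp add: power_add[symmetric])
    then have "T i / T j = (c i / c j) * x ^ (j - i)" unfolding T_def using x0 by (simp add: power_inverse field_simps)
    ultimately have "in_max_ideal V (T i / T j)" by simp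
    moreover assume "vr_unit V (T i / T j)"
    ultimately show False using vr_unit_not_in_max_ideal[OF V] by blast
  qed
  then have nonunit: "\<not> vr_unit V (T i / T j)" if "i \<in> A" "j \<in> A" "i \<noteq> j" for i j
    using that vr_unit_inverse[OF V, of "T i / T j"] by (cases "i < j") auto
  have "sum T A \<noteq> 0" using valuation_ring_sum_nonzero[OF V Af T0 nonunit] .
  then show False using sum0 by simp
qed

lemma rat_fun_field_generator_in_valuation_ring:
  assumes V: "valuation_ring V" "F \<subseteq> V" and F: "subfield F" and t: "\<not> algebraic_over F t"
  shows "\<exists>s. s \<in> V \<and> \<not> algebraic_over F s \<and>
    (\<forall>l\<in>rat_fun_field F t. \<exists>a b. poly_over F a \<and> poly_over F b \<and> poly b s \<noteq> 0 \<and> l = poly a s / poly b s)"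
proof (cases "t \<in> V")
  case True
  then show ?thesis using t unfolding rat_fun_field_def by blast
next
  case False
  have FR: "subring F" using subfieldD(1)[OF F] .
  define s where "s = inverse t"
  have t0: "t \<noteq> 0" using not_algebraic_nonzero[OF FR t] .
  have s0: "s \<noteq> 0" unfolding s_def using t0 by simp
  have sV: "s \<in> V" unfolding s_def using valuation_ring_notin[OF V(1) False] by blast
  have salg: "\<not> algebraic_over F s"
  proof
    assume "algebraic_over F s"
    then have "algebraic_over F (inverse s)" using algebraic_inverse[OF FR _ s0] by blast
    then show False using t unfolding s_def by simp
  qed
  have conv: "poly p t = poly (reflect_poly p) s / s ^ degree p" for p
    using poly_reflect_poly_nz[OF s0, of p] s0 unfolding s_def by (simp add: field_simps)
  have rep: "\<exists>a b. poly_over F a \<and> poly_over F b \<and> poly b s \<noteq> 0 \<and> l = poly a s / poly b s"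
    if hl: "l \<in> rat_fun_field F t" for l
  proof -
    obtain a b where ab: "poly_over F a" "poly_over F b" "poly b t \<noteq> 0" "l = poly a t / poly b t"
      using hl unfolding rat_fun_field_def by blast
    define a' where "a' = reflect_poly a * monom 1 (degree b)"
    define b' where "b' = reflect_poly b * monom 1 (degree a)"
    have pa': "poly a' s = poly (reflect_poly a) s * s ^ degree b" unfolding a'_def by (simp add: poly_monom)
    have pb': "poly b' s = poly (reflect_poly b) s * s ^ degree a" unfolding b'_def by (simp add: poly_monom)
    have rb: "poly (reflect_poly b) s \<noteq> 0" using ab(3) conv[of b] by auto
    have "l = poly a' s / poly b' s" unfolding ab(4) pa' pb' conv[of a] conv[of b] using s0 rb
      by (simp add: field_simps)
    moreover have "poly b' s \<noteq> 0" unfolding pb' using rb s0 by simp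
    moreover have "poly_over F a'" "poly_over F b'" unfolding a'_def b'_def
      using ab(1,2) by (auto intro!: poly_over_mult[OF FR] poly_over_reflect[OF FR] poly_over_monom[OF FR] subringD(2)[OF FR])
    ultimately show ?thesis by blast
  qed
  show ?thesis using sV salg rep by blast
qed

lemma factor_through_minimal_uniformizer:
  assumes V: "valuation_ring V" "F \<subseteq> V" and F: "subfield F" and s: "s \<in> V" "\<not> algebraic_over F s"
    and \<pi>: "poly_over F \<pi>" "\<pi> \<noteq> 0" "in_max_ideal V (poly \<pi> s)"
    and minimal: "\<And>f. poly_over F f \<Longrightarrow> f \<noteq> 0 \<Longrightarrow> in_max_ideal V (poly f s) \<Longrightarrow> degree \<pi> \<le> degree f"
    and g: "poly_over F g" "g \<noteq> 0"
  shows "\<exists>k u. vr_unit V u \<and> poly g s = poly \<pi> s ^ k * u"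
  using g
proof (induction "degree g" arbitrary: g rule: less_induct)
  case (less g)
  have polyV: "poly h s \<in> V" if "poly_over F h" for h
    using subring_poly[OF valuation_ring_subring[OF V(1)] poly_over_mono[OF that V(2)] s(1)] .
  have deg_\<pi>: "degree \<pi> \<ge> 1"
  proof (rule ccontr)
    assume "\<not> degree \<pi> \<ge> 1"
    then have "poly \<pi> s = coeff \<pi> 0" "coeff \<pi> 0 \<noteq> 0" using \<pi>(2)
      by (metis degree_0_id less_one not_le poly_const_conv, metis leading_coeff_0_iff less_one not_le)
    moreover have "coeff \<pi> 0 \<in> F" using \<pi>(1) unfolding poly_over_def by blast
    ultimately have "vr_unit V (poly \<pi> s)" unfolding vr_unit_def using V(2) subfieldD(2)[OF F] by auto
    then show False using vr_unit_not_in_max_ideal[OF V(1)] \<pi>(3) by blast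
  qed
  have gs0: "poly g s \<noteq> 0" using not_algebraic_poly[OF s(2) less(2,3)] .
  show ?case
  proof (cases "in_max_ideal V (poly g s)")
    case False
    then have "vr_unit V (poly g s)" using vr_unitI[OF V(1) polyV[OF less(2)] gs0] by blast
    then show ?thesis by (intro exI[of _ 0] exI[of _ "poly g s"]) simp
  next
    case True
    obtain q r where qr: "poly_over F q" "poly_over F r" "g = \<pi> * q + r" "r = 0 \<or> degree r < degree \<pi>"
      using poly_divmod_over[OF F \<pi>(1,2) less(2)] by blast
    have "poly r s = poly g s - poly \<pi> s * poly q s" using qr(3) by simp
    moreover have "in_max_ideal V (poly \<pi> s * poly q s)" using in_max_ideal_mult_right[OF V(1) \<pi>(3) polyV[OF qr(1)]] .
    ultimately have "in_max_ideal V (poly r s)" using in_max_ideal_diff[OF V(1) True] by simp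
    then have "r = 0" using minimal[OF qr(2)] qr(4) by fastforce
    then have g: "g = \<pi> * q" using qr(3) by simp
    then have q0: "q \<noteq> 0" using less(3) by auto
    have "degree g = degree \<pi> + degree q" unfolding g using \<pi>(2) q0 by (rule degree_mult_eq)
    then have "degree q < degree g" using deg_\<pi> by simp
    then obtain k u where "vr_unit V u" "poly q s = poly \<pi> s ^ k * u" using less(1)[OF _ qr(1) q0] by blast
    then show ?thesis unfolding g by (intro exI[of _ "Suc k"] exI[of _ u]) simp
  qed
qed

lemma uniformizer_exists:
  assumes V: "valuation_ring V" "F \<subseteq> V" and F: "subfield F" and s: "s \<in> V" "\<not> algebraic_over F s"
    and ex: "\<exists>f. poly_over F f \<and> f \<noteq> 0 \<and> in_max_ideal V (poly f s)"
  shows "\<exists>\<pi>. poly_over F \<pi> \<and> \<pi> \<noteq> 0 \<and> in_max_ideal V (poly \<pi> s) \<and>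
     (\<forall>g. poly_over F g \<and> g \<noteq> 0 \<longrightarrow> (\<exists>k u. vr_unit V u \<and> poly g s = poly \<pi> s ^ k * u))"
proof -
  define P where "P = {f. poly_over F f \<and> f \<noteq> 0 \<and> in_max_ideal V (poly f s)}"
  define n where "n = (LEAST n. \<exists>f\<in>P. degree f = n)"
  have "\<exists>f\<in>P. degree f = n" unfolding n_def by (rule LeastI_ex) (use ex in \<open>auto simp: P_def\<close>)
  then obtain \<pi> where \<pi>: "\<pi> \<in> P" "degree \<pi> = n" by blast
  have "degree \<pi> \<le> degree f" if "f \<in> P" for f
    unfolding \<pi>(2) n_def using that by (intro Least_le) blast
  then show ?thesis using \<pi>(1) factor_through_minimal_uniformizer[OF V F s] unfolding P_def by blast
qed

section \<open>Discrete valuations from valuation rings\<close>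

lemma int_valuation_least_positive_value:
  fixes w :: "'k::field \<Rightarrow> int"
  assumes wm: "\<And>y z. y \<noteq> 0 \<Longrightarrow> z \<noteq> 0 \<Longrightarrow> w (y * z) = w y + w z"
    and x: "x \<noteq> 0" "w x > 0"
  obtains g :: nat where "g > 0" "\<And>m. \<exists>y. y \<noteq> 0 \<and> w y = m * int g" "\<And>y. y \<noteq> 0 \<Longrightarrow> int g dvd w y"
proof -
  have w1: "w 1 = 0" using wm[of 1 1] by simp
  have winv: "w (inverse y) = - w y" if "y \<noteq> 0" for y
    using wm[of y "inverse y"] that w1 by simp
  have wpow: "w (y ^ n) = int n * w y" if "y \<noteq> 0" for y n
    using that by (induction n) (auto simp: w1 wm algebra_simps)
  define g where "g = (LEAST n::nat. n > 0 \<and> (\<exists>y. y \<noteq> 0 \<and> w y = int n))"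
  have ex: "\<exists>n::nat. n > 0 \<and> (\<exists>y. y \<noteq> 0 \<and> w y = int n)"
    using x by (intro exI[of _ "nat (w x)"]) auto
  have g: "g > 0" "\<exists>y. y \<noteq> 0 \<and> w y = int g" unfolding g_def using LeastI_ex[OF ex] by blast+
  have gmin: "g \<le> n" if "n > 0" "y \<noteq> 0" "w y = int n" for n y
    unfolding g_def using that by (intro Least_le) blast
  obtain y0 where y0: "y0 \<noteq> 0" "w y0 = int g" using g(2) by blast
  have multiple: "\<exists>y. y \<noteq> 0 \<and> w y = m * int g" for m :: int
  proof (cases "m \<ge> 0")
    case True
    then show ?thesis using y0 wpow[of y0 "nat m"] by (intro exI[of _ "y0 ^ nat m"]) simp
  next
    case False
    have "w (inverse y0 ^ nat (- m)) = int (nat (- m)) * (- int g)"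
      using wpow[of "inverse y0" "nat (- m)"] winv[OF y0(1)] y0 by simp
    then show ?thesis using False y0(1) by (intro exI[of _ "inverse y0 ^ nat (- m)"]) simp
  qed
  have "int g dvd w y" if y: "y \<noteq> 0" for y
  proof -
    define r where "r = w y mod int g"
    obtain z where z: "z \<noteq> 0" "w z = (- (w y div int g)) * int g" using multiple by blast
    have "w (y * z) = r" 
      using wm[OF y z(1)] z(2) minus_div_mult_eq_mod[of "w y" "int g"] unfolding r_def by simp
    moreover have "r \<ge> 0" "r < int g" unfolding r_def using g(1) by auto
    moreover have "y * z \<noteq> 0" using y z by simp
    ultimately have "r = 0" using gmin[of "nat r" "y * z"] by (cases "r = 0") auto
    then show ?thesis unfolding r_def by (simp add: dvd_eq_mod_eq_0)
  qed
  then show ?thesis using that g(1) multiple by blast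
qed

lemma dval_normalize:
  fixes w :: "'k::field \<Rightarrow> int"
  assumes wm: "\<And>y z. y \<noteq> 0 \<Longrightarrow> z \<noteq> 0 \<Longrightarrow> w (y * z) = w y + w z"
    and wu: "\<And>y z. y \<noteq> 0 \<Longrightarrow> z \<noteq> 0 \<Longrightarrow> y + z \<noteq> 0 \<Longrightarrow> min (w y) (w z) \<le> w (y + z)"
    and x: "x \<noteq> 0" "w x > 0"
  shows "\<exists>v. dval v \<and> v x > 0"
proof -
  obtain g :: nat where g0: "g > 0" and multiple: "\<And>m. \<exists>y. y \<noteq> 0 \<and> w y = m * int g"
    and gdvd: "\<And>y. y \<noteq> 0 \<Longrightarrow> int g dvd w y"
    using int_valuation_least_positive_value[OF wm x] by blast
  define v where "v y = (if y = 0 then 0 else w y div int g)" for y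
  have dv: "dval v" unfolding dval_def
  proof (intro conjI allI impI)
    show "v 0 = 0" unfolding v_def by simp
  next
    fix a b :: 'k assume ab: "a \<noteq> 0" "b \<noteq> 0"
    obtain a' where a': "w a = int g * a'" using gdvd[OF ab(1)] by (auto elim: dvdE)
    obtain b' where b': "w b = int g * b'" using gdvd[OF ab(2)] by (auto elim: dvdE)
    have "w (a * b) = int g * (a' + b')" using wm[OF ab] a' b' by (simp add: algebra_simps)
    then show "v (a * b) = v a + v b" unfolding v_def using ab a' b' g0 by simp
  next
    fix a b :: 'k assume ab: "a \<noteq> 0" "b \<noteq> 0" "a + b \<noteq> 0"
    have "w a \<le> w (a + b) \<or> w b \<le> w (a + b)" using wu[OF ab] by linarith
    then have "w a div int g \<le> w (a + b) div int g \<or> w b div int g \<le> w (a + b) div int g"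
      using g0 zdiv_mono1 by auto
    then show "min (v a) (v b) \<le> v (a + b)" unfolding v_def using ab by auto
  next
    fix n :: int
    obtain y where y: "y \<noteq> 0" "w y = n * int g" using multiple by blast
    then have "v y = n" unfolding v_def using g0 by simp
    then show "\<exists>x. x \<noteq> 0 \<and> v x = n" using y(1) by blast
  qed
  obtain a where "w x = int g * a" using gdvd[OF x(1)] by (auto elim: dvdE)
  then have "v x > 0" unfolding v_def using x g0 by (simp add: zero_less_mult_iff)
  then show ?thesis using dv by blast
qed

text \<open>
  If every \<open>y \<noteq> 0\<close> has a power \<open>y\<^sup>j\<close>, \<open>1 \<le> j \<le> N\<close>, that is a unit times a power of
  \<open>\<pi>\<close> (with integer exponent), then all \<open>y\<^bsup>N!\<^esup>\<close> are, and the exponent is a valuation whose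
  ring is \<open>V\<close>.
\<close>
context
  fixes V :: "'k::field set" and \<pi> :: 'k and N :: nat
  assumes V: "valuation_ring V" and \<pi>_max: "in_max_ideal V \<pi>" "\<pi> \<noteq> 0"
    and power_rep: "\<And>y. y \<noteq> 0 \<Longrightarrow> \<exists>j. 1 \<le> j \<and> j \<le> N \<and> (\<exists>k1 k2 u. vr_unit V u \<and> y ^ j * \<pi> ^ k2 = \<pi> ^ k1 * u)"
begin

definition ord_rep :: "'k \<Rightarrow> nat \<Rightarrow> nat \<Rightarrow> bool" where
  "ord_rep y k1 k2 \<longleftrightarrow> (\<exists>u. vr_unit V u \<and> y ^ fact N * \<pi> ^ k2 = \<pi> ^ k1 * u)"

lemma ord_rep_exists: "y \<noteq> 0 \<Longrightarrow> \<exists>k1 k2. ord_rep y k1 k2"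
proof -
  assume y: "y \<noteq> 0"
  obtain j k1 k2 u where j: "1 \<le> j" "j \<le> N" "vr_unit V u" "y ^ j * \<pi> ^ k2 = \<pi> ^ k1 * u"
    using power_rep[OF y] by blast
  obtain e where e: "fact N = j * e" using dvd_fact[OF j(1,2)] by (auto elim: dvdE)
  have "(y ^ j * \<pi> ^ k2) ^ e = (\<pi> ^ k1 * u) ^ e" using j(4) by simp
  then have "y ^ fact N * \<pi> ^ (k2 * e) = \<pi> ^ (k1 * e) * u ^ e"
    unfolding e by (simp add: power_mult power_mult_distrib)
  moreover have "vr_unit V (u ^ e)" using vr_unit_power[OF V j(3)] .
  ultimately show ?thesis unfolding ord_rep_def by blast
qed

lemma power_uniformizer_unit_eq:
  assumes "vr_unit V u" "vr_unit V u'" "\<pi> ^ a * u = \<pi> ^ b * u'"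
  shows "a = b"
proof (rule ccontr)
  assume ne: "a \<noteq> b"
  have gen: "False" if lt: "a' < b'" and uu: "vr_unit V u1" "vr_unit V u2" and eq: "\<pi> ^ a' * u1 = \<pi> ^ b' * u2" for a' b' u1 u2
  proof -
    have "\<pi> ^ b' = \<pi> ^ a' * \<pi> ^ (b' - a')" using lt by (simp add: power_add[symmetric])
    then have "u1 = \<pi> ^ (b' - a') * u2" using eq \<pi>_max(2) by (simp add: mult.assoc)
    moreover have "in_max_ideal V (\<pi> ^ (b' - a') * u2)"
      using in_max_ideal_mult_right[OF V in_max_ideal_power[OF V \<pi>_max(1)]] uu(2) lt
      unfolding vr_unit_def by simp
    ultimately show False using vr_unit_not_in_max_ideal[OF V uu(1)] by simp
  qed
  show False
  proof (cases "a < b")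
    case True show False by (rule gen[OF True assms(1,2,3)])
  next
    case False
    then have "b < a" using ne by simp
    moreover have "\<pi> ^ b * u' = \<pi> ^ a * u" using assms(3) by simp
    ultimately show False by (rule gen[OF _ assms(2,1)])
  qed
qed

lemma ord_rep_unique:
  assumes "ord_rep y k1 k2" "ord_rep y l1 l2"
  shows "int k1 - int k2 = int l1 - int l2"
proof -
  obtain u where u: "vr_unit V u" "y ^ fact N * \<pi> ^ k2 = \<pi> ^ k1 * u" using assms(1) unfolding ord_rep_def by blast
  obtain u' where u': "vr_unit V u'" "y ^ fact N * \<pi> ^ l2 = \<pi> ^ l1 * u'" using assms(2) unfolding ord_rep_def by blast
  have "\<pi> ^ (k1 + l2) * u = (y ^ fact N * \<pi> ^ k2) * \<pi> ^ l2" using u(2) by (simp add: power_add algebra_simps)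
  also have "\<dots> = (y ^ fact N * \<pi> ^ l2) * \<pi> ^ k2" by (simp add: algebra_simps)
  also have "\<dots> = \<pi> ^ (l1 + k2) * u'" using u'(2) by (simp add: power_add algebra_simps)
  finally have "k1 + l2 = l1 + k2" using power_uniformizer_unit_eq[OF u(1) u'(1)] by blast
  then show ?thesis by simp
qed

definition vr_ord :: "'k \<Rightarrow> int" where
  "vr_ord y = (if y = 0 then 0 else (SOME z. \<exists>k1 k2. ord_rep y k1 k2 \<and> z = int k1 - int k2))"

lemma vr_ord_eq: "y \<noteq> 0 \<Longrightarrow> ord_rep y k1 k2 \<Longrightarrow> vr_ord y = int k1 - int k2"
proof -
  assume y: "y \<noteq> 0" and r: "ord_rep y k1 k2"
  have "\<exists>k1 k2. ord_rep y k1 k2 \<and> (SOME z. \<exists>k1 k2. ord_rep y k1 k2 \<and> z = int k1 - int k2) = int k1 - int k2"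
    using r by (intro someI_ex[of "\<lambda>z. \<exists>k1 k2. ord_rep y k1 k2 \<and> z = int k1 - int k2"]) blast
  then obtain l1 l2 where "ord_rep y l1 l2" "(SOME z. \<exists>k1 k2. ord_rep y k1 k2 \<and> z = int k1 - int k2) = int l1 - int l2"
    by blast
  then show ?thesis unfolding vr_ord_def using y ord_rep_unique[OF r] by simp
qed

lemma ord_rep_mult: "ord_rep y k1 k2 \<Longrightarrow> ord_rep z l1 l2 \<Longrightarrow> ord_rep (y * z) (k1 + l1) (k2 + l2)"
proof -
  assume a: "ord_rep y k1 k2" "ord_rep z l1 l2"
  obtain u where u: "vr_unit V u" "y ^ fact N * \<pi> ^ k2 = \<pi> ^ k1 * u" using a(1) unfolding ord_rep_def by blast
  obtain u' where u': "vr_unit V u'" "z ^ fact N * \<pi> ^ l2 = \<pi> ^ l1 * u'" using a(2) unfolding ord_rep_def by blast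
  have "(y * z) ^ fact N * \<pi> ^ (k2 + l2) = (y ^ fact N * \<pi> ^ k2) * (z ^ fact N * \<pi> ^ l2)"
    by (simp add: power_add power_mult_distrib algebra_simps)
  also have "\<dots> = \<pi> ^ (k1 + l1) * (u * u')" unfolding u(2) u'(2) by (simp add: power_add algebra_simps)
  finally show ?thesis unfolding ord_rep_def using vr_unit_mult[OF V u(1) u'(1)] by blast
qed

lemma ord_rep_inverse: "y \<noteq> 0 \<Longrightarrow> ord_rep y k1 k2 \<Longrightarrow> ord_rep (inverse y) k2 k1"
proof -
  assume y: "y \<noteq> 0" and a: "ord_rep y k1 k2"
  obtain u where u: "vr_unit V u" "y ^ fact N * \<pi> ^ k2 = \<pi> ^ k1 * u" using a unfolding ord_rep_def by blast
  have u0: "u \<noteq> 0" using u(1) unfolding vr_unit_def by blast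
  have "inverse y ^ fact N * \<pi> ^ k1 = \<pi> ^ k2 * inverse u"
    using u(2) y u0 \<pi>_max(2) by (simp add: power_inverse field_simps)
  then show ?thesis unfolding ord_rep_def using vr_unit_inverse[OF V u(1)] by blast
qed

lemma vr_ord_mult: "y \<noteq> 0 \<Longrightarrow> z \<noteq> 0 \<Longrightarrow> vr_ord (y * z) = vr_ord y + vr_ord z"
proof -
  assume yz: "y \<noteq> 0" "z \<noteq> 0"
  obtain k1 k2 l1 l2 where r: "ord_rep y k1 k2" "ord_rep z l1 l2" using ord_rep_exists yz by blast
  show ?thesis using vr_ord_eq[OF yz(1) r(1)] vr_ord_eq[OF yz(2) r(2)] vr_ord_eq[of "y * z", OF _ ord_rep_mult[OF r]] yz by simp
qed

lemma vr_ord_inverse: "y \<noteq> 0 \<Longrightarrow> vr_ord (inverse y) = - vr_ord y"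
proof -
  assume y: "y \<noteq> 0"
  obtain k1 k2 where r: "ord_rep y k1 k2" using ord_rep_exists y by blast
  show ?thesis using vr_ord_eq[OF y r] vr_ord_eq[of "inverse y", OF _ ord_rep_inverse[OF y r]] y by simp
qed

lemma vr_ord_nonneg_iff: "y \<noteq> 0 \<Longrightarrow> y \<in> V \<longleftrightarrow> vr_ord y \<ge> 0"
proof -
  assume y: "y \<noteq> 0"
  obtain k1 k2 where r: "ord_rep y k1 k2" using ord_rep_exists y by blast
  obtain u where u: "vr_unit V u" "y ^ fact N * \<pi> ^ k2 = \<pi> ^ k1 * u" using r unfolding ord_rep_def by blast
  have wy: "vr_ord y = int k1 - int k2" using vr_ord_eq[OF y r] .
  have VR': "subring V" using valuation_ring_subring[OF V] .
  show ?thesis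
  proof
    assume yV: "y \<in> V"
    show "vr_ord y \<ge> 0"
    proof (rule ccontr)
      assume "\<not> vr_ord y \<ge> 0"
      then have lt: "k1 < k2" using wy by simp
      have "\<pi> ^ k2 = \<pi> ^ k1 * \<pi> ^ (k2 - k1)" using lt by (simp add: power_add[symmetric])
      then have "y ^ fact N * \<pi> ^ (k2 - k1) = u" using u(2) \<pi>_max(2) by (simp add: algebra_simps)
      moreover have "in_max_ideal V (y ^ fact N * \<pi> ^ (k2 - k1))"
        using in_max_ideal_mult[OF V in_max_ideal_power[OF V \<pi>_max(1)] subring_power[OF VR' yV]] lt by simp
      ultimately show False using vr_unit_not_in_max_ideal[OF V u(1)] by simp
    qed
  next
    assume "vr_ord y \<ge> 0"
    then have le: "k2 \<le> k1" using wy by simp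
    have "\<pi> ^ k1 = \<pi> ^ k2 * \<pi> ^ (k1 - k2)" using le by (simp add: power_add[symmetric])
    then have yM: "y ^ fact N = \<pi> ^ (k1 - k2) * u" using u(2) \<pi>_max(2) by (simp add: algebra_simps)
    have yMV: "y ^ fact N \<in> V" unfolding yM
      using subringD(4)[OF VR' subring_power[OF VR' in_max_ideal_in[OF V \<pi>_max(1)]]] u(1) unfolding vr_unit_def by blast
    show "y \<in> V"
    proof (rule ccontr)
      assume "y \<notin> V"
      then have "in_max_ideal V (inverse y)" using valuation_ring_notin[OF V] by blast
      then have "in_max_ideal V (inverse y ^ fact N)" using in_max_ideal_power[OF V, of _ "fact N"] by simp
      then have "in_max_ideal V (y ^ fact N * inverse y ^ fact N)" using in_max_ideal_mult[OF V _ yMV] by blast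
      moreover have "y ^ fact N * inverse y ^ fact N = 1" using y by (simp add: power_inverse)
      ultimately show False using not_in_max_ideal_1[OF V] by simp
    qed
  qed
qed

lemma vr_ord_ultra: "y \<noteq> 0 \<Longrightarrow> z \<noteq> 0 \<Longrightarrow> y + z \<noteq> 0 \<Longrightarrow> min (vr_ord y) (vr_ord z) \<le> vr_ord (y + z)"
proof -
  assume yz: "y \<noteq> 0" "z \<noteq> 0" "y + z \<noteq> 0"
  have VR': "subring V" using valuation_ring_subring[OF V] .
  have gen: "vr_ord a \<le> vr_ord (a + b)" if ab: "a \<noteq> 0" "b \<noteq> 0" "a + b \<noteq> 0" "b / a \<in> V" for a b
  proof -
    have e: "a + b = a * (1 + b / a)" using ab(1) by (simp add: field_simps)
    have n: "1 + b / a \<noteq> 0" using e ab(3) by auto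
    have "1 + b / a \<in> V" using subringD(3)[OF VR' subringD(2)[OF VR'] ab(4)] .
    then have "vr_ord (1 + b / a) \<ge> 0" using vr_ord_nonneg_iff[OF n] by blast
    then show ?thesis unfolding e using vr_ord_mult[OF ab(1) n] by simp
  qed
  have "z / y \<noteq> 0" using yz by simp
  then consider "z / y \<in> V" | "inverse (z / y) \<in> V" using valuation_ring_cases[OF V] by blast
  then show ?thesis
  proof cases
    case 1 then show ?thesis using gen[OF yz 1] by simp
  next
    case 2
    then have "y / z \<in> V" by simp
    then show ?thesis using gen[of z y] yz by (simp add: add.commute)
  qed
qed

lemma vr_ord_pos: "in_max_ideal V x \<Longrightarrow> x \<noteq> 0 \<Longrightarrow> vr_ord x > 0"
proof -
  assume xm: "in_max_ideal V x" and x0: "x \<noteq> 0"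
  have "vr_ord x \<ge> 0" using vr_ord_nonneg_iff[OF x0] in_max_ideal_in[OF V xm] by blast
  moreover have "vr_ord x \<noteq> 0"
  proof
    assume "vr_ord x = 0"
    then have "vr_ord (inverse x) \<ge> 0" using vr_ord_inverse[OF x0] by simp
    then have "inverse x \<in> V" using vr_ord_nonneg_iff[of "inverse x"] x0 by simp
    then show False using xm x0 unfolding in_max_ideal_def by simp
  qed
  ultimately show ?thesis by simp
qed

lemma dval_from_valuation_ring: "in_max_ideal V x \<Longrightarrow> x \<noteq> 0 \<Longrightarrow> \<exists>v. dval v \<and> v x > 0"
  using dval_normalize[of vr_ord x] vr_ord_mult vr_ord_ultra vr_ord_pos by blast

end

text \<open>In a vanishing sum two terms have a unit ratio, and that ratio is a power of \<open>y\<close> times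
  an element of \<open>L\<close>.\<close>
lemma power_rep_from_dependence:
  assumes V: "valuation_ring V" and L: "subfield L"
    and dep: "\<exists>c. (\<forall>i\<le>N. c i \<in> L) \<and> (\<exists>i\<le>N. c i \<noteq> 0) \<and> (\<Sum>i\<le>N. c i * y ^ i) = 0"
    and Lrep: "\<And>l. l \<in> L \<Longrightarrow> l \<noteq> 0 \<Longrightarrow> \<exists>k1 k2 u. vr_unit V u \<and> l * \<pi> ^ k2 = \<pi> ^ k1 * u"
    and y0: "y \<noteq> 0"
  shows "\<exists>j. 1 \<le> j \<and> j \<le> N \<and> (\<exists>k1 k2 u. vr_unit V u \<and> y ^ j * \<pi> ^ k2 = \<pi> ^ k1 * u)"
proof -
  obtain c where c: "\<forall>i\<le>N. c i \<in> L" "\<exists>i\<le>N. c i \<noteq> 0" "(\<Sum>i\<le>N. c i * y ^ i) = 0"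
    using dep by blast
  define A where "A = {i. i \<le> N \<and> c i \<noteq> 0}"
  define T where "T i = c i * y ^ i" for i
  have Af: "finite A" "A \<noteq> {}" unfolding A_def using c(2) by auto
  have T0: "T i \<noteq> 0" if "i \<in> A" for i using that y0 unfolding A_def T_def by simp
  have "sum T A = (\<Sum>i\<le>N. c i * y ^ i)" unfolding T_def A_def
    by (rule sum.mono_neutral_left) auto
  then have "sum T A = 0" using c(3) by simp
  moreover have "sum T A \<noteq> 0" if "\<And>i j. i \<in> A \<Longrightarrow> j \<in> A \<Longrightarrow> i \<noteq> j \<Longrightarrow> \<not> vr_unit V (T i / T j)"
    using valuation_ring_sum_nonzero[OF V Af T0 that] .
  ultimately obtain i j where ij: "i \<in> A" "j \<in> A" "i \<noteq> j" "vr_unit V (T i / T j)" by blast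
  have unit_ratio: "\<exists>i j. i \<in> A \<and> j \<in> A \<and> j < i \<and> vr_unit V (T i / T j)"
  proof (cases "j < i")
    case False
    then have "i < j" using ij(3) by simp
    moreover have "vr_unit V (T j / T i)" using vr_unit_inverse[OF V ij(4)] by simp
    ultimately show ?thesis using ij(1,2) by blast
  qed (use ij(1,2,4) in blast)
  then obtain i j where ij: "i \<in> A" "j \<in> A" "j < i" "vr_unit V (T i / T j)" by blast
  have ci: "c i \<noteq> 0" "c j \<noteq> 0" "c i \<in> L" "c j \<in> L" using ij(1,2) c(1) unfolding A_def by auto
  then obtain k1 k2 u where ku: "vr_unit V u" "(c j / c i) * \<pi> ^ k2 = \<pi> ^ k1 * u"
    using Lrep[OF subfieldD(3)[OF L ci(4) ci(3)]] ci(1,2) by fastforce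
  have "y ^ i = y ^ j * y ^ (i - j)" using ij(3) by (simp add: power_add[symmetric])
  then have "y ^ (i - j) = (T i / T j) * (c j / c i)" unfolding T_def using y0 ci by (simp add: field_simps)
  then have "y ^ (i - j) * \<pi> ^ k2 = (T i / T j) * ((c j / c i) * \<pi> ^ k2)" by (simp only: mult.assoc)
  also have "\<dots> = \<pi> ^ k1 * ((T i / T j) * u)" unfolding ku(2) by (simp only: ac_simps)
  finally have "y ^ (i - j) * \<pi> ^ k2 = \<pi> ^ k1 * ((T i / T j) * u)" .
  moreover have "vr_unit V ((T i / T j) * u)" using vr_unit_mult[OF V ij(4) ku(1)] .
  moreover have "1 \<le> i - j" "i - j \<le> N" using ij(1,3) unfolding A_def by auto
  ultimately show ?thesis by blast
qed

lemma rat_fun_field_power_rep: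
  assumes V: "valuation_ring V" and s: "\<not> algebraic_over F s"
    and \<pi>: "poly_over F \<pi>" "\<pi> \<noteq> 0"
    and \<pi>_fact: "\<And>g. poly_over F g \<Longrightarrow> g \<noteq> 0 \<Longrightarrow> \<exists>k u. vr_unit V u \<and> poly g s = poly \<pi> s ^ k * u"
    and l: "poly_over F a" "poly_over F b" "poly b s \<noteq> 0" "l = poly a s / poly b s" "l \<noteq> 0"
  shows "\<exists>k1 k2 u. vr_unit V u \<and> l * poly \<pi> s ^ k2 = poly \<pi> s ^ k1 * u"
proof -
  have a0: "a \<noteq> 0" and b0: "b \<noteq> 0" using l(3-5) by auto
  obtain k1 u1 where k1: "vr_unit V u1" "poly a s = poly \<pi> s ^ k1 * u1" using \<pi>_fact[OF l(1) a0] by blast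
  obtain k2 u2 where k2: "vr_unit V u2" "poly b s = poly \<pi> s ^ k2 * u2" using \<pi>_fact[OF l(2) b0] by blast
  have "u2 \<noteq> 0" using k2(1) unfolding vr_unit_def by blast
  moreover have "poly \<pi> s \<noteq> 0" using not_algebraic_poly[OF s \<pi>] .
  ultimately have "l * poly \<pi> s ^ k2 = poly \<pi> s ^ k1 * (u1 / u2)"
    unfolding l(4) k1(2) k2(2) by (simp add: field_simps)
  then show ?thesis using vr_unit_divide[OF V k1(1) k2(1)] by blast
qed

lemma dval_pos_exists:
  fixes t x :: "'k::field"
  assumes t: "\<not> algebraic_over prime_subfield t" "finite_dim_over (rat_fun_field prime_subfield t)"
    and x: "\<not> algebraic_over prime_subfield x"
  shows "\<exists>v. dval v \<and> v x > 0"
proof -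
  let ?F = "prime_subfield :: 'k set"
  have F: "subfield ?F" by (rule subfield_prime_subfield)
  obtain V where V: "valuation_ring V" "?F \<subseteq> V" "x \<in> V" "inverse x \<notin> V"
    using valuation_ring_exists[OF subfieldD(1)[OF F] x] by blast
  define L where "L = rat_fun_field ?F t"
  have L: "subfield L" "finite_dim_over L" unfolding L_def using subfield_rat_fun_field[OF subfieldD(1)[OF F]] t(2) by auto
  obtain s where s: "s \<in> V" "\<not> algebraic_over ?F s"
    and srep: "\<And>l. l \<in> L \<Longrightarrow> \<exists>a b. poly_over ?F a \<and> poly_over ?F b \<and> poly b s \<noteq> 0 \<and> l = poly a s / poly b s"
    using rat_fun_field_generator_in_valuation_ring[OF V(1,2) F t(1)] unfolding L_def by blast
  have "\<exists>f. poly_over ?F f \<and> f \<noteq> 0 \<and> in_max_ideal V (poly f s)"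
  proof -
    obtain l where l: "l \<in> L" "l \<notin> V" using finite_dim_subfield_not_subset[OF V(1) L V(3,4)] by blast
    obtain a b where ab: "poly_over ?F a" "poly_over ?F b" "poly b s \<noteq> 0" "l = poly a s / poly b s"
      using srep[OF l(1)] by blast
    have l0: "l \<noteq> 0" and il: "in_max_ideal V (inverse l)" using valuation_ring_notin[OF V(1) l(2)] by blast+
    have "poly b s = poly a s * inverse l" using ab(3,4) l0 by (auto simp: field_simps)
    moreover have "poly a s \<in> V" using subring_poly[OF valuation_ring_subring[OF V(1)] poly_over_mono[OF ab(1) V(2)] s(1)] .
    ultimately have "in_max_ideal V (poly b s)" using in_max_ideal_mult[OF V(1) il] by simp
    moreover have "b \<noteq> 0" using ab(3) by auto
    ultimately show ?thesis using ab(2) by blast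
  qed
  then obtain \<pi> where \<pi>: "poly_over ?F \<pi>" "\<pi> \<noteq> 0" "in_max_ideal V (poly \<pi> s)"
    and \<pi>_fact: "\<And>g. poly_over ?F g \<Longrightarrow> g \<noteq> 0 \<Longrightarrow> \<exists>k u. vr_unit V u \<and> poly g s = poly \<pi> s ^ k * u"
    using uniformizer_exists[OF V(1,2) F s] by blast
  have Lrep: "\<exists>k1 k2 u. vr_unit V u \<and> l * poly \<pi> s ^ k2 = poly \<pi> s ^ k1 * u" if "l \<in> L" "l \<noteq> 0" for l
    using srep[OF that(1)] rat_fun_field_power_rep[OF V(1) s(2) \<pi>(1,2) \<pi>_fact] that(2) by blast
  obtain N where N: "\<And>y. \<exists>c. (\<forall>i\<le>N. c i \<in> L) \<and> (\<exists>i\<le>N. c i \<noteq> 0) \<and> (\<Sum>i\<le>N. c i * y ^ i) = 0"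
    using finite_dim_powers_dependent[OF L] by blast
  have "in_max_ideal V x" "x \<noteq> 0" using V(3,4) unfolding in_max_ideal_def by auto
  then show ?thesis
    using dval_from_valuation_ring[OF V(1) \<pi>(3) not_algebraic_poly[OF s(2) \<pi>(1,2)]
        power_rep_from_dependence[OF V(1) L(1) N Lrep]]
    by blast
qed

section \<open>The constant field\<close>

lemma global_function_fieldE:
  assumes "global_function_field TYPE('k::field)"
  obtains p t where "prime p" "of_nat p = (0::'k)" "\<not> algebraic_over (prime_subfield::'k set) t"
    "finite_dim_over (rat_fun_field (prime_subfield::'k set) t)"
  using assms unfolding global_function_field_def by blast

lemma finite_prime_subfield_gff:
  assumes "global_function_field TYPE('k::field)"
  shows "finite (prime_subfield :: 'k set)"
proof -
  obtain p :: nat where "prime p" "of_nat p = (0::'k)" using global_function_fieldE[OF assms] by metis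
  then show ?thesis using finite_prime_subfield[of p] prime_gt_0_nat by blast
qed

lemma dval_finite_subring:
  assumes R: "subring R" "finite R" and v: "dval v" and a: "a \<in> R" "a \<noteq> 0"
  shows "v a = 0"
proof -
  have "range (\<lambda>n::nat. a ^ n) \<subseteq> R" using subring_power[OF R(1) a(1)] by blast
  then have "finite (range (\<lambda>n::nat. a ^ n))" using R(2) by (rule finite_subset)
  then have "\<not> inj (\<lambda>n::nat. a ^ n)" using finite_imageD[of "\<lambda>n::nat. a ^ n" UNIV] by auto
  then obtain i j :: nat where "i \<noteq> j" "a ^ i = a ^ j" unfolding inj_def by blast
  then obtain i j :: nat where ij: "i < j" "a ^ i = a ^ j" by (metis linorder_neqE_nat)
  have "a ^ j = a ^ i * a ^ (j - i)" using ij(1) by (simp add: power_add[symmetric])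
  then have "a ^ (j - i) = 1" using ij(2) a(2) by simp
  then have "int (j - i) * v a = 0" using dval_power[OF v a(2), of "j - i"] dval_1[OF v] by simp
  then show ?thesis using ij(1) by simp
qed

text \<open>A constant \<open>c\<close> with a pole would make its minimal relation over \<open>\<bbbF>\<^sub>p\<close> nonzero at \<open>c\<close>;
  applying this to \<open>1/c\<close> excludes zeros as well.\<close>
lemma dval_constant_field:
  assumes fin: "finite (prime_subfield :: 'k::field set)" and v: "dval v"
    and c: "c \<in> (constant_field :: 'k set)" "c \<noteq> 0"
  shows "v c = 0"
proof -
  have nonneg: "v z \<ge> 0" if z: "algebraic_over prime_subfield z" "z \<noteq> 0" for z :: 'k
  proof (rule ccontr)
    assume "\<not> v z \<ge> 0"
    then have neg: "v z < 0" by simp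
    obtain f where f: "f \<noteq> 0" "poly_over prime_subfield f" "poly f z = 0"
      using z(1) unfolding algebraic_over_def by blast
    have cf0: "coeff f i = 0 \<or> v (coeff f i) = 0" for i
    proof -
      have "coeff f i \<in> prime_subfield" using f(2) unfolding poly_over_def by blast
      then show ?thesis using dval_finite_subring[OF subring_prime_subfield fin v] by blast
    qed
    have "lead_coeff f \<noteq> 0" using f(1) by simp
    moreover have "coeff f i = 0 \<or> v (coeff f i) \<ge> 0" for i using cf0[of i] by auto
    ultimately have "poly f z \<noteq> 0"
      using dval_poly_at_pole[OF v _ _ _ z(2) neg] cf0[of "degree f"] by blast
    then show False using f(3) by simp
  qed
  have "algebraic_over prime_subfield c" using c(1) unfolding constant_field_def by simp
  moreover have "algebraic_over prime_subfield (inverse c)"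
    using algebraic_inverse[OF subring_prime_subfield calculation c(2)] .
  ultimately have "v c \<ge> 0" "v (inverse c) \<ge> 0" using nonneg c(2) by simp_all
  then show ?thesis using dval_inverse[OF v c(2)] by simp
qed

lemma zero_in_constant_field: "0 \<in> (constant_field :: 'k::field set)"
  unfolding constant_field_def algebraic_over_def
  using poly_over_X[OF subring_prime_subfield] by (intro CollectI exI[of _ "[:0, 1:]"]) simp

lemma prime_subfield_subset_constant_field: "(prime_subfield :: 'k::field set) \<subseteq> constant_field"
proof
  fix a :: 'k assume a: "a \<in> prime_subfield"
  have "poly_over prime_subfield [:- a, 1:]"
    using poly_over_pCons[OF subring_prime_subfield subringD(5)[OF subring_prime_subfield a] poly_over_const[OF subring_prime_subfield subringD(2)[OF subring_prime_subfield]]] .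
  then show "a \<in> constant_field" unfolding constant_field_def algebraic_over_def
    by (intro CollectI exI[of _ "[:- a, 1:]"]) simp
qed

lemma constant_field_iff_dval_nonneg:
  assumes K: "global_function_field TYPE('k::field)"
  shows "c \<in> (constant_field :: 'k set) \<longleftrightarrow> (\<forall>v. dval v \<longrightarrow> c = 0 \<or> v c \<ge> 0)"
proof
  assume "c \<in> constant_field"
  then show "\<forall>v. dval v \<longrightarrow> c = 0 \<or> v c \<ge> 0" using dval_constant_field[OF finite_prime_subfield_gff[OF K]] by fastforce
next
  assume h: "\<forall>v. dval v \<longrightarrow> c = 0 \<or> v c \<ge> 0"
  show "c \<in> constant_field"
  proof (rule ccontr)
    assume nc: "c \<notin> constant_field"
    then have c0: "c \<noteq> 0" using zero_in_constant_field by blast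
    have "\<not> algebraic_over prime_subfield (inverse c)"
    proof
      assume "algebraic_over prime_subfield (inverse c)"
      moreover have "inverse c \<noteq> 0" using c0 by simp
      ultimately have "algebraic_over prime_subfield (inverse (inverse c))"
        by (rule algebraic_inverse[OF subring_prime_subfield])
      then show False using nc unfolding constant_field_def by simp
    qed
    moreover obtain p t where t: "\<not> algebraic_over (prime_subfield::'k set) t"
      "finite_dim_over (rat_fun_field (prime_subfield::'k set) t)" using global_function_fieldE[OF K] by metis
    ultimately obtain v where v: "dval v" "v (inverse c) > 0" using dval_pos_exists by blast
    then have "v c < 0" using dval_inverse[OF v(1) c0] by simp
    then show False using h v(1) c0 by fastforce
  qed
qed

lemma subfield_constant_field:
  assumes K: "global_function_field TYPE('k::field)"
  shows "subfield (constant_field :: 'k set)"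
proof -
  have C: "constant_field = {c :: 'k. \<forall>v. dval v \<longrightarrow> c = 0 \<or> 0 \<le> v c}"
    using constant_field_iff_dval_nonneg[OF K] by auto
  have "inverse c \<in> constant_field" if "c \<in> constant_field" for c :: 'k
    using that dval_constant_field[OF finite_prime_subfield_gff[OF K] _ that] dval_inverse
    unfolding C by fastforce
  then show ?thesis unfolding subfield_def using subring_dval_nonneg[of dval] unfolding C by blast
qed
lemma finite_poly_over_degree_le:
  assumes "finite F"
  shows "finite {f. poly_over F f \<and> degree f \<le> N}"
proof -
  have "{f. poly_over F f \<and> degree f \<le> N} \<subseteq> Poly ` {xs. set xs \<subseteq> F \<and> length xs = Suc N}"
  proof
    fix f assume f: "f \<in> {f. poly_over F f \<and> degree f \<le> N}"
    have "f = Poly (map (coeff f) [0..<Suc N])"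
    proof (rule poly_eqI)
      fix i
      show "coeff f i = coeff (Poly (map (coeff f) [0..<Suc N])) i"
      proof (cases "i < Suc N")
        case True then show ?thesis by (simp add: nth_default_def del: upt_Suc)
      next
        case False
        then have "coeff f i = 0" using f by (intro coeff_eq_0) auto
        then show ?thesis using False by (simp add: nth_default_def)
      qed
    qed
    moreover have "map (coeff f) [0..<Suc N] \<in> {xs. set xs \<subseteq> F \<and> length xs = Suc N}"
      using f unfolding poly_over_def by (auto simp del: upt_Suc)
    ultimately show "f \<in> Poly ` {xs. set xs \<subseteq> F \<and> length xs = Suc N}" by (rule image_eqI)
  qed
  moreover have "finite (Poly ` {xs. set xs \<subseteq> F \<and> length xs = Suc N})"
    using finite_lists_length_eq[OF assms] by blast
  ultimately show ?thesis by (rule finite_subset)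
qed

lemma poly_altdef_le:
  fixes g :: "'a::comm_ring_1 poly"
  assumes "degree g \<le> K"
  shows "poly g x = (\<Sum>k\<le>K. coeff g k * x ^ k)"
proof -
  have "poly g x = (\<Sum>k\<le>degree g. coeff g k * x ^ k)" by (rule poly_altdef)
  also have "\<dots> = (\<Sum>k\<le>K. coeff g k * x ^ k)"
    by (rule sum.mono_neutral_left) (use assms in \<open>auto simp: coeff_eq_0\<close>)
  finally show ?thesis .
qed

lemma rat_fun_field_common_denominator:
  fixes N :: nat
  assumes F: "subring F" and r: "\<And>i. i \<le> N \<Longrightarrow> r i \<in> rat_fun_field F t"
  obtains g B where "B \<noteq> 0" "\<And>i. i \<le> N \<Longrightarrow> poly_over F (g i)" "\<And>i. i \<le> N \<Longrightarrow> poly (g i) t = r i * B"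
proof -
  have "\<forall>i\<le>N. \<exists>a b. poly_over F a \<and> poly_over F b \<and> poly b t \<noteq> 0 \<and> r i = poly a t / poly b t"
    using r unfolding rat_fun_field_def by blast
  then obtain a b where ab: "\<And>i. i \<le> N \<Longrightarrow>
      poly_over F (a i) \<and> poly_over F (b i) \<and> poly (b i) t \<noteq> 0 \<and> r i = poly (a i) t / poly (b i) t"
    by metis
  define g where "g i = a i * (\<Prod>j\<in>{..N} - {i}. b j)" for i
  define B where "B = (\<Prod>j\<le>N. poly (b j) t)"
  have "poly (b j) t \<noteq> 0" if "j \<le> N" for j using ab[OF that] by blast
  then have "B \<noteq> 0" unfolding B_def by simp
  moreover have "poly_over F (g i)" if "i \<le> N" for i
    unfolding g_def using ab that by (intro poly_over_mult[OF F] poly_over_prod[OF F]) auto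
  moreover have "poly (g i) t = r i * B" if "i \<le> N" for i
  proof -
    have "B = poly (b i) t * (\<Prod>j\<in>{..N} - {i}. poly (b j) t)"
      unfolding B_def using that by (simp add: prod.remove)
    then show ?thesis unfolding g_def using ab[OF that] by (simp add: poly_prod)
  qed
  ultimately show ?thesis using that by blast
qed

text \<open>The term of lowest degree has the smallest valuation, since constants are units at \<open>v\<close>.\<close>
lemma sum_powers_constant_coeffs_nonzero:
  assumes fin: "finite (prime_subfield :: 'k::field set)" and v: "dval v" "v t > 0"
    and e: "\<And>k. e k \<in> (constant_field :: 'k set)" and k1: "k1 \<le> K" "e k1 \<noteq> 0"
  shows "(\<Sum>k\<le>K. t ^ k * e k) \<noteq> 0"
proof -
  have t0: "t \<noteq> 0" using v dvalD(1)[OF v(1)] by auto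
  define k0 where "k0 = (LEAST k. e k \<noteq> 0)"
  have ek0: "e k0 \<noteq> 0" unfolding k0_def using k1(2) by (rule LeastI)
  have k0min: "k0 \<le> k" if "e k \<noteq> 0" for k unfolding k0_def using that by (rule Least_le)
  have vterm: "v (t ^ k * e k) = int k * v t" if "e k \<noteq> 0" for k
    using dvalD(2)[OF v(1), of "t ^ k" "e k"] dval_power[OF v(1) t0] dval_constant_field[OF fin v(1) e that] t0 that
    by simp
  show ?thesis
  proof (rule conjunct1[OF dval_sum_strict_min[OF v(1)]])
    show "finite {..K}" by simp
    show "k0 \<in> {..K}" using k0min[OF k1(2)] k1(1) by simp
    show "t ^ k0 * e k0 \<noteq> 0" using t0 ek0 by simp
    fix k assume k: "k \<in> {..K}" "k \<noteq> k0"
    show "t ^ k * e k = 0 \<or> v (t ^ k0 * e k0) < v (t ^ k * e k)"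
    proof (cases "e k = 0")
      case False
      then have "k0 < k" using k0min[OF False] k(2) by simp
      then have "int k0 * v t < int k * v t" using v(2) by (simp add: mult_strict_right_mono)
      then show ?thesis using vterm[OF False] vterm[OF ek0] by simp
    qed simp
  qed
qed

lemma poly_sum_collect_powers:
  fixes g :: "nat \<Rightarrow> 'a::comm_ring_1 poly"
  assumes "\<And>i. i \<le> N \<Longrightarrow> degree (g i) \<le> K"
  shows "(\<Sum>i\<le>N. poly (g i) t * c ^ i) = (\<Sum>k\<le>K. t ^ k * (\<Sum>i\<le>N. coeff (g i) k * c ^ i))"
proof -
  have "(\<Sum>i\<le>N. poly (g i) t * c ^ i) = (\<Sum>i\<le>N. (\<Sum>k\<le>K. coeff (g i) k * t ^ k) * c ^ i)"
    by (intro sum.cong refl) (simp add: poly_altdef_le[OF assms])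
  also have "\<dots> = (\<Sum>k\<le>K. t ^ k * (\<Sum>i\<le>N. coeff (g i) k * c ^ i))"
    unfolding sum_distrib_left sum_distrib_right by (subst sum.swap) (simp add: algebra_simps)
  finally show ?thesis .
qed

text \<open>
  If \<open>\<bbbF>\<^sub>q\<close> were infinite, some constant \<open>c\<close> would be a root of no nonzero polynomial over
  \<open>\<bbbF>\<^sub>p\<close> of degree \<open>\<le> N\<close>. A linear relation \<open>\<Sum>\<^sub>i r\<^sub>i(t) c\<^sup>i = 0\<close> over \<open>\<bbbF>\<^sub>p(t)\<close> then has, after
  clearing denominators and collecting powers of \<open>t\<close>, a nonzero constant coefficient, which
  contradicts the previous lemma at a zero of \<open>t\<close>.
\<close>
lemma finite_constant_field:
  assumes K: "global_function_field TYPE('k::field)"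
  shows "finite (constant_field :: 'k set)"
proof (rule ccontr)
  assume inf: "infinite (constant_field :: 'k set)"
  let ?F = "prime_subfield :: 'k set"
  let ?C = "constant_field :: 'k set"
  obtain p t where t: "\<not> algebraic_over ?F t" "finite_dim_over (rat_fun_field ?F t)"
    using global_function_fieldE[OF K] by metis
  have Ffin: "finite ?F" using finite_prime_subfield_gff[OF K] .
  have FR: "subring ?F" by (rule subring_prime_subfield)
  have CR: "subring ?C" using subfieldD(1)[OF subfield_constant_field[OF K]] .
  define L where "L = rat_fun_field ?F t"
  have L: "subfield L" unfolding L_def by (rule subfield_rat_fun_field[OF subring_prime_subfield])
  obtain N where N: "\<And>y. \<exists>c. (\<forall>i\<le>N. c i \<in> L) \<and> (\<exists>i\<le>N. c i \<noteq> 0) \<and> (\<Sum>i\<le>N. c i * y ^ i) = 0"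
    using finite_dim_powers_dependent[OF L t(2)[folded L_def]] by blast
  obtain v where v: "dval v" "v t > 0" using dval_pos_exists[OF t t(1)] by blast
  define D where "D = (\<Union>f\<in>{f. poly_over ?F f \<and> degree f \<le> N} - {0}. {x. poly f x = 0})"
  have "finite D" unfolding D_def using finite_poly_over_degree_le[OF Ffin] poly_roots_finite by blast
  with inf have "infinite (?C - D)" by (rule Diff_infinite_finite[rotated])
  then obtain c where c: "c \<in> ?C" "c \<notin> D" by (metis Diff_iff finite.emptyI ex_in_conv)
  obtain r where r: "\<forall>i\<le>N. r i \<in> L" "\<exists>i\<le>N. r i \<noteq> 0" "(\<Sum>i\<le>N. r i * c ^ i) = 0" using N by blast
  obtain g B where gB: "B \<noteq> 0" "\<And>i. i \<le> N \<Longrightarrow> poly_over ?F (g i)" "\<And>i. i \<le> N \<Longrightarrow> poly (g i) t = r i * B"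
    by (rule rat_fun_field_common_denominator[OF FR, of N r t]) (use r(1) in \<open>simp add: L_def\<close>, blast)
  define K where "K = (\<Sum>i\<le>N. degree (g i))"
  have dgK: "degree (g i) \<le> K" if "i \<le> N" for i
    unfolding K_def using that by (intro member_le_sum) auto
  define h where "h k = (\<Sum>i\<le>N. monom (coeff (g i) k) i)" for k
  define e where "e k = poly (h k) c" for k
  have e_sum: "e k = (\<Sum>i\<le>N. coeff (g i) k * c ^ i)" for k
    unfolding e_def h_def by (simp add: poly_sum poly_monom)
  have "(\<Sum>k\<le>K. t ^ k * e k) = (\<Sum>i\<le>N. poly (g i) t * c ^ i)"
    unfolding e_sum by (rule poly_sum_collect_powers[OF dgK, symmetric])
  also have "\<dots> = B * (\<Sum>i\<le>N. r i * c ^ i)"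
    unfolding sum_distrib_left by (intro sum.cong refl) (simp add: gB(3))
  finally have sum0: "(\<Sum>k\<le>K. t ^ k * e k) = 0" using r(3) by simp
  have eC: "e k \<in> ?C" for k
    unfolding e_sum using gB(2) prime_subfield_subset_constant_field c(1)
    by (intro subring_sum[OF CR] subringD(4)[OF CR] subring_power[OF CR]) (auto simp: poly_over_def)
  obtain i1 where i1: "i1 \<le> N" "r i1 \<noteq> 0" using r(2) by blast
  have g1: "g i1 \<noteq> 0" using gB(3)[OF i1(1)] i1(2) gB(1) by auto
  define k1 where "k1 = degree (g i1)"
  have "coeff (h k1) i1 \<noteq> 0" unfolding h_def k1_def using i1(1) g1 by (simp add: coeff_sum coeff_monom)
  then have "h k1 \<noteq> 0" by auto
  moreover have "poly_over ?F (h k1)"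
    unfolding h_def using gB(2) by (intro poly_over_sum[OF FR] poly_over_monom[OF FR]) (auto simp: poly_over_def)
  moreover have "degree (h k1) \<le> N"
    unfolding h_def by (rule degree_le) (simp add: coeff_sum coeff_monom)
  ultimately have "e k1 \<noteq> 0" using c(2) unfolding D_def e_def by auto
  moreover have "k1 \<le> K" unfolding k1_def using dgK[OF i1(1)] .
  ultimately have "(\<Sum>k\<le>K. t ^ k * e k) \<noteq> 0"
    by (rule sum_powers_constant_coeffs_nonzero[OF Ffin v eC, rotated])
  then show False using sum0 by simp
qed

lemma dval_iterates_at_pole:
  assumes v: "dval v" and cf: "\<And>i. coeff f i = 0 \<or> v (coeff f i) \<ge> 0"
    and lc: "lead_coeff f \<noteq> 0" "v (lead_coeff f) = 0" and w: "w \<noteq> 0" "v w < 0"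
  shows "(poly f ^^ n) w \<noteq> 0 \<and> v ((poly f ^^ n) w) = int (degree f) ^ n * v w"
proof (induction n)
  case 0 then show ?case using w by simp
next
  case (Suc n)
  show ?case
  proof (cases "degree f = 0")
    case True
    have "poly f ((poly f ^^ n) w) = lead_coeff f" using True by (metis degree_0_id poly_const_conv)
    then show ?thesis using lc True by simp
  next
    case False
    have neg: "v ((poly f ^^ n) w) < 0"
    proof -
      have "int (degree f) ^ n > 0" using False by simp
      then show ?thesis using Suc w(2) by (simp add: mult_pos_neg)
    qed
    have "poly f ((poly f ^^ n) w) \<noteq> 0 \<and> v (poly f ((poly f ^^ n) w)) = int (degree f) * v ((poly f ^^ n) w)"
      by (rule dval_poly_at_pole[OF v cf lc]) (use Suc neg in auto)
    then show ?thesis using Suc by (simp add: algebra_simps)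
  qed
qed

lemma inj_iterates_at_pole:
  assumes v: "dval v" and cf: "\<And>i. coeff f i = 0 \<or> v (coeff f i) \<ge> 0"
    and lc: "lead_coeff f \<noteq> 0" "v (lead_coeff f) = 0" and w: "w \<noteq> 0" "v w < 0"
    and d: "degree f \<ge> 2"
  shows "inj (\<lambda>n. (poly f ^^ n) w)"
proof (rule injI)
  fix m n assume eq: "(poly f ^^ m) w = (poly f ^^ n) w"
  have e1: "v ((poly f ^^ m) w) = int (degree f) ^ m * v w" using dval_iterates_at_pole[OF assms(1-6), of m] by blast
  have e2: "v ((poly f ^^ n) w) = int (degree f) ^ n * v w" using dval_iterates_at_pole[OF assms(1-6), of n] by blast
  have "int (degree f) ^ m * v w = int (degree f) ^ n * v w" using e1 e2 eq by metis
  then have "int (degree f) ^ m = int (degree f) ^ n" using w(2) by simp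
  moreover have "int (degree f) > 1" using d by simp
  ultimately show "m = n" by (simp add: power_inject_exp)
qed

lemma subring_ring_O: "subring (ring_O vinf)"
  unfolding ring_O_def by (rule subring_dval_nonneg) simp

text \<open>A non-constant has a pole, and so does its inverse; both poles would have to be \<open>\<infinity>\<close>.\<close>
lemma ring_O_unit_constant:
  assumes K: "global_function_field TYPE('k::field)" and vinf: "dval vinf"
    and x: "x \<in> ring_O vinf" "inverse x \<in> ring_O vinf" "x \<noteq> 0"
  shows "x \<in> (constant_field :: 'k set)"
proof (rule ccontr)
  assume nc: "x \<notin> constant_field"
  have ninv: "inverse x \<notin> constant_field"
    using nc subfieldD(2)[OF subfield_constant_field[OF K], of "inverse x"] x(3) by auto
  obtain v where v: "dval v" "v x < 0" using nc constant_field_iff_dval_nonneg[OF K, of x] x(3) by force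
  obtain v' where v': "dval v'" "v' (inverse x) < 0" using ninv constant_field_iff_dval_nonneg[OF K, of "inverse x"] x(3) by force
  have "v = vinf" using x(1) v x(3) unfolding ring_O_def by force
  moreover have "v' = vinf" using x(2) v' x(3) unfolding ring_O_def by force
  ultimately show False using v v' dval_inverse[OF vinf x(3)] by simp
qed

lemma Per_closed: "x \<in> Per f \<Longrightarrow> f x \<in> Per f"
proof -
  assume "x \<in> Per f"
  then obtain n where n: "n \<ge> 1" "(f ^^ n) x = x" unfolding Per_def by blast
  have "(f ^^ n) (f x) = f ((f ^^ n) x)" by (simp add: funpow_swap1)
  then show "f x \<in> Per f" unfolding Per_def using n by auto
qed

lemma Per_iterate: "x \<in> Per f \<Longrightarrow> (f ^^ k) x \<in> Per f"
  by (induction k) (auto intro: Per_closed)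

lemma Fix_subset_Per: "Fix f \<subseteq> Per f"
  unfolding Fix_def Per_def by (auto intro: exI[of _ 1])

lemma funpow_mult_eq_self: "(f ^^ n) x = x \<Longrightarrow> (f ^^ (n * m)) x = x"
proof (induction m)
  case (Suc m)
  have "(f ^^ (n * Suc m)) x = (f ^^ n) ((f ^^ (n * m)) x)" by (simp add: funpow_add)
  then show ?case using Suc by simp
qed simp

lemma Per_common_period:
  assumes "x \<in> Per f" "y \<in> Per f"
  obtains P where "P \<ge> 1" "(f ^^ P) x = x" "(f ^^ P) y = y"
proof -
  obtain n where n: "n \<ge> 1" "(f ^^ n) x = x" using assms(1) unfolding Per_def by blast
  obtain m where m: "m \<ge> 1" "(f ^^ m) y = y" using assms(2) unfolding Per_def by blast
  have "(f ^^ (n * m)) x = x" "(f ^^ (m * n)) y = y"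
    using funpow_mult_eq_self[OF n(2)] funpow_mult_eq_self[OF m(2)] by blast+
  then show ?thesis using that[of "n * m"] n(1) m(1) by (simp add: mult.commute)
qed

definition min_period :: "('a \<Rightarrow> 'a) \<Rightarrow> 'a \<Rightarrow> nat" where
  "min_period f x = (LEAST n. n \<ge> 1 \<and> (f ^^ n) x = x)"

lemma exact_period_min_period:
  assumes "x \<in> Per f" shows "exact_period f (min_period f x) x"
proof -
  have ex: "\<exists>n. n \<ge> 1 \<and> (f ^^ n) x = x" using assms unfolding Per_def by blast
  have "min_period f x \<ge> 1 \<and> (f ^^ min_period f x) x = x"
    unfolding min_period_def by (rule LeastI_ex[OF ex])
  moreover have "(f ^^ m) x \<noteq> x" if "1 \<le> m" "m < min_period f x" for m
    using that not_less_Least unfolding min_period_def by blast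
  ultimately show ?thesis unfolding exact_period_def by blast
qed

lemma exact_period_unique: "exact_period f n x \<Longrightarrow> exact_period f m x \<Longrightarrow> n = m"
  unfolding exact_period_def by (metis linorder_neqE_nat)

lemma exact_period_iff_min_period: "x \<in> Per f \<Longrightarrow> exact_period f n x \<longleftrightarrow> n = min_period f x"
  using exact_period_min_period exact_period_unique by metis

lemma min_period_Fix:
  assumes "x \<in> Fix f" shows "min_period f x = 1"
proof -
  have "exact_period f 1 x" using assms unfolding Fix_def exact_period_def by simp
  moreover have "x \<in> Per f" using Fix_subset_Per assms by (rule subsetD)
  ultimately show ?thesis using exact_period_iff_min_period[of x f 1] by simp
qed

lemma inj_on_orbit_exact_period:
  assumes e: "exact_period f n x"
  shows "inj_on (\<lambda>i. (f ^^ i) x) {..<n}"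
proof (rule inj_onI)
  have False if ij: "i < j" "j < n" "(f ^^ i) x = (f ^^ j) x" for i j
  proof -
    have "(f ^^ (n - j + i)) x = (f ^^ (n - j)) ((f ^^ i) x)" by (simp add: funpow_add)
    also have "\<dots> = (f ^^ (n - j)) ((f ^^ j) x)" using ij(3) by simp
    also have "\<dots> = (f ^^ (n - j + j)) x" by (simp add: funpow_add)
    also have "n - j + j = n" using ij by simp
    also have "(f ^^ n) x = x" using e unfolding exact_period_def by blast
    finally have "(f ^^ (n - j + i)) x = x" .
    moreover have "1 \<le> n - j + i" "n - j + i < n" using ij by auto
    ultimately show False using e unfolding exact_period_def by blast
  qed
  moreover fix i j assume "i \<in> {..<n}" "j \<in> {..<n}" "(f ^^ i) x = (f ^^ j) x"
  ultimately show "i = j" by (metis lessThan_iff linorder_neqE_nat)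
qed

definition affine_line :: "'k::field set \<Rightarrow> 'k \<Rightarrow> 'k \<Rightarrow> 'k set" where
  "affine_line F a u = (\<lambda>c. a + c * u) ` F"

lemma affine_line_through_common_points:
  assumes F: "subfield F" and u: "u \<noteq> 0" and pp: "p \<noteq> p'"
    and p: "p \<in> affine_line F a u" "p' \<in> affine_line F a u" "p \<in> affine_line F b w" "p' \<in> affine_line F b w"
  shows "b \<in> affine_line F a u"
proof -
  obtain \<gamma> \<delta> \<alpha> \<beta> where C: "\<gamma> \<in> F" "\<delta> \<in> F" "\<alpha> \<in> F" "\<beta> \<in> F"
    and e: "p = a + \<gamma> * u" "p' = a + \<delta> * u" "p = b + \<alpha> * w" "p' = b + \<beta> * w"
    using p unfolding affine_line_def by blast
  have R: "subring F" using subfieldD(1)[OF F] .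
  have ab: "\<beta> - \<alpha> \<noteq> 0" using pp e by auto
  have "(b + \<beta> * w) - (b + \<alpha> * w) = (a + \<delta> * u) - (a + \<gamma> * u)" using e by simp
  then have "(\<beta> - \<alpha>) * w = (\<delta> - \<gamma>) * u" by (simp add: algebra_simps)
  then have w: "w = ((\<delta> - \<gamma>) / (\<beta> - \<alpha>)) * u" using ab by (simp add: field_simps)
  have "b = p - \<alpha> * w" using e(3) by simp
  also have "\<dots> = a + \<gamma> * u - \<alpha> * (((\<delta> - \<gamma>) / (\<beta> - \<alpha>)) * u)" using e(1) w by simp
  finally have "b = a + (\<gamma> - \<alpha> * ((\<delta> - \<gamma>) / (\<beta> - \<alpha>))) * u" by (simp add: algebra_simps)
  moreover have "\<gamma> - \<alpha> * ((\<delta> - \<gamma>) / (\<beta> - \<alpha>)) \<in> F"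
    using C by (intro subringD(6)[OF R] subringD(4)[OF R] subfieldD(3)[OF F]) auto
  ultimately show ?thesis unfolding affine_line_def by blast
qed

lemma infinite_gff:
  assumes K: "global_function_field TYPE('k::field)"
  shows "infinite (UNIV :: 'k set)"
proof
  assume fin: "finite (UNIV :: 'k set)"
  obtain p t where t: "\<not> algebraic_over (prime_subfield::'k set) t" using global_function_fieldE[OF K] by metis
  have "inj (\<lambda>n::nat. t ^ n)"
  proof (rule injI)
    fix i j :: nat assume eq: "t ^ i = t ^ j"
    show "i = j"
    proof (rule ccontr)
      assume ij: "i \<noteq> j"
      define h :: "'k poly" where "h = monom 1 i - monom 1 j"
      have "coeff h i = 1" unfolding h_def using ij by (simp add: coeff_monom)
      then have "h \<noteq> 0" by auto
      moreover have "poly_over prime_subfield h" unfolding h_def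
        by (intro poly_over_diff[OF subring_prime_subfield] poly_over_monom[OF subring_prime_subfield]
            subringD(2)[OF subring_prime_subfield])
      moreover have "poly h t = 0" unfolding h_def using eq by (simp add: poly_monom)
      ultimately show False using t unfolding algebraic_over_def by blast
    qed
  qed
  moreover have "finite (range (\<lambda>n::nat. t ^ n))" using fin by (rule finite_subset[OF subset_UNIV])
  ultimately show False using finite_imageD by blast
qed

lemma degree_affine_conj:
  assumes inf: "infinite (UNIV :: 'k::field set)" and \<alpha>: "\<alpha> \<noteq> 0" and d: "degree \<phi> \<ge> 1"
    and conj: "\<And>x. poly \<psi> x = \<alpha> * poly \<phi> ((x - \<beta>) / \<alpha>) + (\<beta> :: 'k)"
  shows "degree \<psi> = degree \<phi>"
proof -
  define \<Psi> where "\<Psi> = smult \<alpha> (pcompose \<phi> [:- \<beta> / \<alpha>, inverse \<alpha>:]) + [:\<beta>:]"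
  have "poly (\<psi> - \<Psi>) x = 0" for x unfolding \<Psi>_def using conj[of x] \<alpha> by (simp add: poly_pcompose field_simps)
  then have "\<psi> - \<Psi> = 0" using inf poly_roots_finite[of "\<psi> - \<Psi>"] by auto
  then have "\<psi> = \<Psi>" by simp
  moreover have "degree (smult \<alpha> (pcompose \<phi> [:- \<beta> / \<alpha>, inverse \<alpha>:])) = degree \<phi>"
    using \<alpha> by (simp add: degree_pcompose)
  ultimately show ?thesis unfolding \<Psi>_def using d by (simp add: degree_add_eq_left)
qed

lemma PrePer_semiconj:
  assumes inj: "inj \<eta>" and semiconj: "\<And>y. g (\<eta> y) = \<eta> (f y)"
  shows "PrePer f = \<eta> -` PrePer g"
proof -
  have iter: "(g ^^ n) (\<eta> y) = \<eta> ((f ^^ n) y)" for n y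
    by (induction n) (simp_all add: semiconj)
  have "{(g ^^ n) (\<eta> y) | n. True} = \<eta> ` {(f ^^ n) y | n. True}" for y
    unfolding iter by blast
  then show ?thesis
    unfolding PrePer_def using finite_image_iff[OF inj_on_subset[OF inj subset_UNIV]] by auto
qed

text \<open>Outside the constant field an element has a pole, where the orbit escapes.\<close>
lemma PrePer_poly_over_constant_field:
  assumes K: "global_function_field TYPE('k::field)"
    and \<psi>: "poly_over (constant_field :: 'k set) \<psi>" "degree \<psi> \<ge> 2"
  shows "PrePer (poly \<psi>) = constant_field"
proof
  let ?C = "constant_field :: 'k set"
  have CR: "subring ?C" using subfieldD(1)[OF subfield_constant_field[OF K]] .
  show "PrePer (poly \<psi>) \<subseteq> ?C"
  proof
    fix z assume z: "z \<in> PrePer (poly \<psi>)"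
    show "z \<in> ?C"
    proof (rule ccontr)
      assume nz: "z \<notin> ?C"
      then have z0: "z \<noteq> 0" using zero_in_constant_field by blast
      obtain v where v: "dval v" "v z < 0" using nz constant_field_iff_dval_nonneg[OF K, of z] z0 by force
      have cf: "coeff \<psi> i = 0 \<or> v (coeff \<psi> i) \<ge> 0" for i
        using \<psi>(1) constant_field_iff_dval_nonneg[OF K] v(1) unfolding poly_over_def by blast
      have lc0: "lead_coeff \<psi> \<noteq> 0" using \<psi>(2) by auto
      have "lead_coeff \<psi> \<in> ?C" using \<psi>(1) unfolding poly_over_def by blast
      then have "v (lead_coeff \<psi>) = 0" using dval_constant_field[OF finite_prime_subfield_gff[OF K] v(1) _ lc0] by blast
      then have "inj (\<lambda>n. (poly \<psi> ^^ n) z)" using inj_iterates_at_pole[OF v(1) cf lc0 _ z0 v(2) \<psi>(2)] by blast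
      moreover have "finite (range (\<lambda>n. (poly \<psi> ^^ n) z))"
        using z unfolding PrePer_def by (simp add: full_SetCompr_eq)
      ultimately show False using finite_imageD by blast
    qed
  qed
  show "?C \<subseteq> PrePer (poly \<psi>)"
  proof
    fix c assume c: "c \<in> ?C"
    have "(poly \<psi> ^^ n) c \<in> ?C" for n
      by (induction n) (use c subring_poly[OF CR \<psi>(1)] in auto)
    then have "{(poly \<psi> ^^ n) c | n. True} \<subseteq> ?C" by blast
    then have "finite {(poly \<psi> ^^ n) c | n. True}" using finite_constant_field[OF K] by (rule finite_subset)
    then show "c \<in> PrePer (poly \<psi>)" unfolding PrePer_def by simp
  qed
qed

text \<open>The interpolation polynomial of \<open>\<phi>\<close> in the coordinate \<open>c\<close> of the line \<open>a + c u\<close>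
  agrees with the conjugate \<open>(\<phi>(a + c u) - a) / u\<close> at more than \<open>deg \<phi>\<close> points.\<close>
lemma conj_to_poly_over_if_line_invariant:
  assumes F: "subfield F" and u: "u \<noteq> 0" and S: "finite S" "card S > degree \<phi>"
    and line: "S \<subseteq> affine_line F a u" "poly \<phi> ` S \<subseteq> affine_line F a u"
  shows "conj_to_poly_over F \<phi>"
proof -
  define Z where "Z = {c \<in> F. a + c * u \<in> S}"
  have inj_line: "inj_on (\<lambda>c. a + c * u) Z" using u by (intro inj_onI) simp
  have "S = (\<lambda>c. a + c * u) ` Z" using line(1) unfolding Z_def affine_line_def by blast
  then have cZ: "card Z = card S" and Zf: "finite Z" using card_image[OF inj_line] S(1) finite_image_iff[OF inj_line] by auto
  define g where "g c = (poly \<phi> (a + c * u) - a) / u" for c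
  have gF: "g c \<in> F" if "c \<in> Z" for c
  proof -
    have "poly \<phi> (a + c * u) \<in> affine_line F a u" using that line(2) unfolding Z_def by blast
    then obtain c' where "c' \<in> F" "poly \<phi> (a + c * u) = a + c' * u" unfolding affine_line_def by blast
    then show ?thesis unfolding g_def using u by simp
  qed
  have "Z \<subseteq> F" unfolding Z_def by blast
  then have "\<exists>h. poly_over F h \<and> (h = 0 \<or> degree h < card Z) \<and> (\<forall>z\<in>Z. poly h z = g z)"
    by (rule poly_over_interpolation[OF F Zf _ gF])
  then obtain h where h: "poly_over F h" "h = 0 \<or> degree h < card Z" "\<forall>z\<in>Z. poly h z = g z"
    by blast
  define R where "R = smult (inverse u) (pcompose \<phi> [:a, u:]) - [:a / u:]"
  have polyR: "poly R c = g c" for c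
    unfolding R_def g_def using u by (simp add: poly_pcompose field_simps)
  have "degree (pcompose \<phi> [:a, u:]) = degree \<phi>" using u by (simp add: degree_pcompose)
  then have "degree (smult (inverse u) (pcompose \<phi> [:a, u:])) \<le> degree \<phi>"
    using degree_smult_le by metis
  then have "degree R \<le> degree \<phi>" unfolding R_def using degree_diff_le[of _ "degree \<phi>" "[:a / u:]"] by simp
  have "h = R"
  proof (rule poly_eqI_degree)
    show "\<And>x. x \<in> Z \<Longrightarrow> poly h x = poly R x" using h(3) polyR by simp
    show "degree h < card Z" using h(2) cZ S(2) by auto
    show "degree R < card Z" using \<open>degree R \<le> degree \<phi>\<close> cZ S(2) by simp
  qed
  have arg: "(x - (- (a / u))) / inverse u = a + x * u" for x using u by (simp add: field_simps)
  have "poly h x = inverse u * poly \<phi> ((x - (- (a / u))) / inverse u) + (- (a / u))" for x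
    unfolding arg \<open>h = R\<close> polyR g_def using u by (simp add: field_simps)
  then show ?thesis unfolding conj_to_poly_over_def using h(1) u
    by (intro exI[of _ "inverse u"] exI[of _ "- (a / u)"] exI[of _ h]) simp
qed

section \<open>Periodic points of a polynomial over \<open>\<O>\<close>\<close>

locale O_polynomial =
  fixes \<phi> :: "'k::field poly" and vinf :: "'k \<Rightarrow> int"
  assumes K: "global_function_field TYPE('k)"
    and vinf: "dval vinf"
    and coeffs: "\<forall>i. coeff \<phi> i \<in> ring_O vinf"
    and deg2: "degree \<phi> \<ge> 2"
    and lc: "lead_coeff \<phi> \<in> ring_O vinf" "inverse (lead_coeff \<phi>) \<in> ring_O vinf"
begin

abbreviation "f \<equiv> poly \<phi>"
abbreviation "\<O> \<equiv> ring_O vinf"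
abbreviation "Fq \<equiv> (constant_field :: 'k set)"
abbreviation "line a \<equiv> affine_line Fq a (f a - a)"

lemma subfield_Fq: "subfield Fq" using subfield_constant_field[OF K] .
lemma subring_Fq: "subring Fq" using subfieldD(1)[OF subfield_Fq] .
lemma finite_Fq: "finite Fq" using finite_constant_field[OF K] .

lemma Per_subset_O: "Per f \<subseteq> \<O>"
proof
  fix x assume xP: "x \<in> Per f"
  show "x \<in> \<O>"
  proof (rule ccontr)
    assume "x \<notin> \<O>"
    then obtain v where v: "dval v" "v \<noteq> vinf" "x \<noteq> 0" "v x < 0" unfolding ring_O_def by force
    have lc0: "lead_coeff \<phi> \<noteq> 0" using deg2 by auto
    have cf: "coeff \<phi> i = 0 \<or> v (coeff \<phi> i) \<ge> 0" for i using coeffs v(1,2) unfolding ring_O_def by blast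
    have "v (lead_coeff \<phi>) \<ge> 0" "v (inverse (lead_coeff \<phi>)) \<ge> 0"
      using lc v(1,2) lc0 unfolding ring_O_def by auto
    then have "v (lead_coeff \<phi>) = 0" using dval_inverse[OF v(1) lc0] by simp
    then have inj: "inj (\<lambda>n. (f ^^ n) x)" using inj_iterates_at_pole[OF v(1) cf lc0 _ v(3,4) deg2] by blast
    obtain n where "n \<ge> 1" "(f ^^ n) x = (f ^^ 0) x" using xP unfolding Per_def by auto
    then show False using injD[OF inj] by fastforce
  qed
qed

lemma iterate_diff_nonzero:
  assumes "x \<in> Per f" "y \<in> Per f" "x \<noteq> y"
  shows "(f ^^ i) x - (f ^^ i) y \<noteq> 0"
proof
  obtain P where P: "P \<ge> 1" "(f ^^ P) x = x" "(f ^^ P) y = y" using Per_common_period[OF assms(1,2)] by blast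
  have Pi: "P * i = (P * i - i) + i" using P(1) by simp
  assume "(f ^^ i) x - (f ^^ i) y = 0"
  then have "(f ^^ (P * i - i)) ((f ^^ i) x) = (f ^^ (P * i - i)) ((f ^^ i) y)" by simp
  then have "(f ^^ (P * i)) x = (f ^^ (P * i)) y" by (subst (1 2) Pi) (simp add: funpow_add)
  then show False using funpow_mult_eq_self[OF P(2)] funpow_mult_eq_self[OF P(3)] assms(3) by metis
qed

lemma iterate_diff_ratio_in_O:
  assumes x: "x \<in> Per f" and y: "y \<in> Per f" and xy: "x \<noteq> y"
  shows "((f ^^ (i + j)) x - (f ^^ (i + j)) y) / ((f ^^ i) x - (f ^^ i) y) \<in> \<O>"
proof (induction j)
  case 0 then show ?case using iterate_diff_nonzero[OF assms] subringD(2)[OF subring_ring_O] by simp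
next
  case (Suc j)
  define D where "D k = (f ^^ k) x - (f ^^ k) y" for k
  have xk: "(f ^^ (i + j)) x \<in> \<O>" and yk: "(f ^^ (i + j)) y \<in> \<O>"
    using Per_subset_O Per_iterate[OF x] Per_iterate[OF y] by blast+
  obtain H where H: "H \<in> \<O>" "D (Suc (i + j)) = D (i + j) * H"
    using poly_diff_factor[OF subring_ring_O _ xk yk] coeffs unfolding D_def by auto
  then have "D (i + Suc j) / D i = (D (i + j) / D i) * H" by simp
  moreover have "(D (i + j) / D i) * H \<in> \<O>" using subringD(4)[OF subring_ring_O Suc[folded D_def] H(1)] .
  ultimately have "D (i + Suc j) / D i \<in> \<O>" by (simp only:)
  then show ?case unfolding D_def .
qed

text \<open>The ratio and its inverse lie in \<open>\<O>\<close>, since iterating a common period brings the pair back.\<close>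
lemma iterate_diff_ratio_constant:
  assumes x: "x \<in> Per f" and y: "y \<in> Per f" and xy: "x \<noteq> y"
  shows "\<exists>\<epsilon>\<in>Fq. \<epsilon> \<noteq> 0 \<and> (f ^^ k) x - (f ^^ k) y = \<epsilon> * (x - y)"
proof -
  obtain P where P: "P \<ge> 1" "(f ^^ P) x = x" "(f ^^ P) y = y" using Per_common_period[OF x y] by blast
  define D where "D k = (f ^^ k) x - (f ^^ k) y" for k
  have D0: "D k \<noteq> 0" for k unfolding D_def by (rule iterate_diff_nonzero[OF assms])
  have "D k / D 0 \<in> \<O>" using iterate_diff_ratio_in_O[OF assms, of 0 k] unfolding D_def by simp
  moreover have "inverse (D k / D 0) \<in> \<O>"
  proof -
    have "k + (P * k - k) = P * k" using P(1) by simp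
    then have "D (k + (P * k - k)) = D 0"
      unfolding D_def using funpow_mult_eq_self[OF P(2), of k] funpow_mult_eq_self[OF P(3), of k] by simp
    then show ?thesis using iterate_diff_ratio_in_O[OF assms, of k "P * k - k"] unfolding D_def by simp
  qed
  moreover have "D k / D 0 \<noteq> 0" using D0 by simp
  ultimately have "D k / D 0 \<in> Fq" using ring_O_unit_constant[OF K vinf] by blast
  moreover have "(f ^^ k) x - (f ^^ k) y = D k / D 0 * (x - y)" using D0[of 0] unfolding D_def by simp
  moreover have "D k / D 0 \<noteq> 0" using D0 by simp
  ultimately show ?thesis by blast
qed

lemma iterate_on_line:
  assumes a: "a \<in> Per f" "f a \<noteq> a"
  shows "(f ^^ k) a \<in> line a"
proof (induction k)
  case 0 then show ?case using subringD(1)[OF subring_Fq] unfolding affine_line_def by force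
next
  case (Suc k)
  then obtain \<gamma> where g: "\<gamma> \<in> Fq" "(f ^^ k) a = a + \<gamma> * (f a - a)" unfolding affine_line_def by blast
  obtain \<epsilon> where e: "\<epsilon> \<in> Fq" "(f ^^ k) (f a) - (f ^^ k) a = \<epsilon> * (f a - a)"
    using iterate_diff_ratio_constant[OF Per_closed[OF a(1)] a(1) a(2)] by blast
  have "(f ^^ Suc k) a = (f ^^ k) (f a)" by (simp add: funpow_swap1)
  also have "\<dots> = a + (\<gamma> + \<epsilon>) * (f a - a)" using e(2) g(2) by (simp add: algebra_simps)
  finally show ?case using subringD(3)[OF subring_Fq g(1) e(1)] unfolding affine_line_def by blast
qed

lemma periodic_on_line:
  assumes a: "a \<in> Per f" "f a \<noteq> a" and y: "y \<in> Per f" "(f ^^ k) y = y" and ak: "(f ^^ k) a \<noteq> a"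
  shows "y \<in> line a"
proof -
  have ya: "y \<noteq> a" using y(2) ak by auto
  obtain \<epsilon> where e: "\<epsilon> \<in> Fq" "(f ^^ k) y - (f ^^ k) a = \<epsilon> * (y - a)"
    using iterate_diff_ratio_constant[OF y(1) a(1) ya] by blast
  obtain \<gamma> where g: "\<gamma> \<in> Fq" "(f ^^ k) a = a + \<gamma> * (f a - a)"
    using iterate_on_line[OF a] unfolding affine_line_def by blast
  have eq: "(1 - \<epsilon>) * (y - a) = \<gamma> * (f a - a)" using e(2) g(2) y(2) by (simp add: algebra_simps)
  have e1: "1 - \<epsilon> \<noteq> 0"
  proof
    assume "1 - \<epsilon> = 0"
    then have "\<gamma> = 0" using eq a(2) by simp
    then show False using g(2) ak by simp
  qed
  then have "y = a + (\<gamma> / (1 - \<epsilon>)) * (f a - a)" using eq by (simp add: field_simps)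
  moreover have "\<gamma> / (1 - \<epsilon>) \<in> Fq"
    using subfieldD(3)[OF subfield_Fq g(1) subringD(6)[OF subring_Fq subringD(2)[OF subring_Fq] e(1)]] .
  ultimately show ?thesis unfolding affine_line_def by blast
qed

lemma min_period_le_card:
  assumes a: "a \<in> Per f" "f a \<noteq> a"
  shows "min_period f a \<le> card Fq"
proof -
  let ?n = "min_period f a"
  have "(\<lambda>i. (f ^^ i) a) ` {..<?n} \<subseteq> line a" using iterate_on_line[OF a] by blast
  then have "card ((\<lambda>i. (f ^^ i) a) ` {..<?n}) \<le> card (line a)"
    using finite_Fq unfolding affine_line_def by (intro card_mono) auto
  moreover have "card ((\<lambda>i. (f ^^ i) a) ` {..<?n}) = ?n"
    using card_image[OF inj_on_orbit_exact_period[OF exact_period_min_period[OF a(1)]]] by simp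
  moreover have "card (line a) \<le> card Fq" unfolding affine_line_def using finite_Fq by (rule card_image_le)
  ultimately show ?thesis by simp
qed

lemma exists_max_min_period:
  assumes "Per f \<noteq> Fix f"
  obtains a where "a \<in> Per f" "f a \<noteq> a" "\<And>x. x \<in> Per f \<Longrightarrow> min_period f x \<le> min_period f a"
proof -
  define S where "S = {min_period f x | x. x \<in> Per f \<and> f x \<noteq> x}"
  have "S \<subseteq> {..card Fq}" unfolding S_def using min_period_le_card by auto
  then have Sf: "finite S" using finite_subset by blast
  have "\<not> Per f \<subseteq> Fix f" using assms Fix_subset_Per[of f] by (metis subset_antisym)
  then obtain a0 where a0: "a0 \<in> Per f" "f a0 \<noteq> a0" unfolding Fix_def by blast
  then have "S \<noteq> {}" unfolding S_def by blast
  with Sf have "Max S \<in> S" by (rule Max_in)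
  then obtain a where a: "a \<in> Per f" "f a \<noteq> a" "Max S = min_period f a" unfolding S_def by blast
  have a1: "min_period f a \<ge> 1" using exact_period_min_period[OF a(1)] unfolding exact_period_def by blast
  have "min_period f x \<le> min_period f a" if x: "x \<in> Per f" for x
  proof (cases "f x = x")
    case True
    then show ?thesis using min_period_Fix[of x f] a1 unfolding Fix_def by simp
  next
    case False
    then have "min_period f x \<in> S" unfolding S_def using x by blast
    with Sf show ?thesis unfolding a(3)[symmetric] by (rule Max_ge)
  qed
  then show ?thesis using that a(1,2) by blast
qed

lemma two_common_points_on_line:
  assumes a: "a \<in> Per f" "f a \<noteq> a" and y: "y \<in> Per f" "f y \<noteq> y"
    and p: "p \<in> Per f" "p' \<in> Per f" "p \<noteq> p'" "(f ^^ k) p = p" "(f ^^ k) p' = p'"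
    and k: "(f ^^ k) a \<noteq> a" "(f ^^ k) y \<noteq> y"
  shows "y \<in> line a"
proof (rule affine_line_through_common_points[OF subfield_Fq _ p(3)])
  show "f a - a \<noteq> 0" using a(2) by simp
  show "p \<in> line a" "p' \<in> line a" using periodic_on_line[OF a] p k(1) by blast+
  show "p \<in> affine_line Fq y (f y - y)" "p' \<in> affine_line Fq y (f y - y)"
    using periodic_on_line[OF y] p k(2) by blast+
qed

text \<open>Here \<open>a\<close> has maximal period \<open>n\<close>; a periodic point off the line of \<open>a\<close> forces case (c),
  since a second period \<open>m < n\<close> or a second fixed point would put two common points on the
  lines of \<open>a\<close> and \<open>y\<close>.\<close>
lemma two_cycles_condition_if_off_line:
  assumes a: "a \<in> Per f" "f a \<noteq> a" and max: "\<And>x. x \<in> Per f \<Longrightarrow> min_period f x \<le> min_period f a"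
    and y: "y \<in> Per f" "y \<notin> line a"
  shows "two_cycles_condition f"
proof -
  define n where "n = min_period f a"
  have ea: "exact_period f n a" unfolding n_def using exact_period_min_period[OF a(1)] .
  then have n2: "n > 1" using a(2) unfolding exact_period_def by (cases "n = 1") auto
  have below_n: "(f ^^ m) x \<noteq> x" if "exact_period f n x" "1 \<le> m" "m < n" for x m
    using that unfolding exact_period_def by blast
  have ey: "exact_period f n y"
  proof -
    define m where "m = min_period f y"
    have ey: "exact_period f m y" unfolding m_def using exact_period_min_period[OF y(1)] .
    have "m \<le> n" unfolding m_def n_def using max[OF y(1)] .
    moreover have "\<not> m < n"
      using periodic_on_line[OF a y(1), of m] below_n[OF ea] ey y(2) unfolding exact_period_def by auto
    ultimately show ?thesis using ey by simp
  qed
  have fy: "f y \<noteq> y" using below_n[OF ey, of 1] n2 by simp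
  have orbit: "y \<notin> {(f ^^ m) a | m. True}" using iterate_on_line[OF a] y(2) by blast
  have "x \<in> Fix f \<or> exact_period f n x" if x: "x \<in> Per f" for x
  proof (rule ccontr)
    assume "\<not> (x \<in> Fix f \<or> exact_period f n x)"
    then have fx: "f x \<noteq> x" and m: "min_period f x \<noteq> n"
      using exact_period_min_period[OF x] unfolding Fix_def by auto
    define m where "m = min_period f x"
    have m1: "1 \<le> m" "m < n" using exact_period_min_period[OF x] max[OF x] m
      unfolding m_def n_def exact_period_def by auto
    have xm: "(f ^^ m) x = x" using exact_period_min_period[OF x] unfolding m_def exact_period_def by blast
    then have "(f ^^ m) (f x) = f x" by (metis funpow_swap1)
    then have "y \<in> line a"
      using two_common_points_on_line[OF a y(1) fy x Per_closed[OF x] fx[symmetric] xm]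
        below_n[OF ea m1] below_n[OF ey m1] by blast
    then show False using y(2) by blast
  qed
  moreover have "x1 = x2" if "x1 \<in> Fix f" "x2 \<in> Fix f" for x1 x2
  proof (rule ccontr)
    assume "x1 \<noteq> x2"
    moreover have "x1 \<in> Per f" "x2 \<in> Per f" using subsetD[OF Fix_subset_Per[of f]] that by simp_all
    ultimately have "y \<in> line a"
      using two_common_points_on_line[OF a y(1) fy, of x1 x2 1] that a(2) fy unfolding Fix_def by simp
    then show False using y(2) by blast
  qed
  ultimately show ?thesis unfolding two_cycles_condition_def using n2 ea ey orbit by blast
qed

lemma Per_subset_line:
  assumes "Per f \<noteq> Fix f" "\<not> two_cycles_condition f"
  obtains a where "a \<in> Per f" "f a \<noteq> a" "Per f \<subseteq> line a"
proof -
  obtain a where a: "a \<in> Per f" "f a \<noteq> a" "\<And>x. x \<in> Per f \<Longrightarrow> min_period f x \<le> min_period f a"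
    using exists_max_min_period[OF assms(1)] by blast
  have "y \<in> line a" if "y \<in> Per f" for y
    using two_cycles_condition_if_off_line[OF a that] assms(2) by blast
  then show ?thesis using that a(1,2) by blast
qed

lemma card_Per_le:
  assumes "\<not> conj_to_poly_over Fq \<phi>" "Per f \<noteq> Fix f" "\<not> two_cycles_condition f"
  shows "finite (Per f) \<and> card (Per f) \<le> min (degree \<phi>) (card Fq)"
proof -
  obtain a where a: "a \<in> Per f" "f a \<noteq> a" and line: "Per f \<subseteq> line a"
    using Per_subset_line[OF assms(2,3)] by blast
  have fin_line: "finite (line a)" unfolding affine_line_def using finite_Fq by (rule finite_imageI)
  with line have fin: "finite (Per f)" by (rule finite_subset)
  from fin_line line have "card (Per f) \<le> card (line a)" by (rule card_mono)
  moreover have "card (line a) \<le> card Fq" unfolding affine_line_def using finite_Fq by (rule card_image_le)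
  moreover have "card (Per f) \<le> degree \<phi>"
  proof (rule ccontr)
    assume "\<not> card (Per f) \<le> degree \<phi>"
    then have many: "card (Per f) > degree \<phi>" by simp
    have invariant: "f ` Per f \<subseteq> line a" using line Per_closed[of _ f] by blast
    have "f a - a \<noteq> 0" using a(2) by simp
    then have "conj_to_poly_over Fq \<phi>"
      using conj_to_poly_over_if_line_invariant[OF subfield_Fq _ fin many line invariant] by blast
    then show False using assms(1) by simp
  qed
  ultimately show ?thesis using fin by simp
qed

lemma card_PrePer_if_conj:
  assumes "conj_to_poly_over Fq \<phi>"
  shows "finite (PrePer f) \<and> card (PrePer f) = card Fq"
proof -
  obtain \<alpha> \<beta> \<psi> where \<alpha>: "\<alpha> \<noteq> 0" and \<psi>: "poly_over Fq \<psi>"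
    and conj: "\<And>x. poly \<psi> x = \<alpha> * f ((x - \<beta>) / \<alpha>) + \<beta>"
    using assms unfolding conj_to_poly_over_def by blast
  define \<eta> where "\<eta> y = \<alpha> * y + \<beta>" for y
  have "degree \<psi> = degree \<phi>" using degree_affine_conj[OF infinite_gff[OF K] \<alpha> _ conj] deg2 by simp
  then have "PrePer (poly \<psi>) = Fq" using PrePer_poly_over_constant_field[OF K \<psi>] deg2 by simp
  moreover have "inj \<eta>" unfolding \<eta>_def using \<alpha> by (intro injI) simp
  moreover have "poly \<psi> (\<eta> y) = \<eta> (f y)" for y unfolding \<eta>_def using conj \<alpha> by simp
  ultimately have "PrePer f = \<eta> -` Fq" using PrePer_semiconj by metis
  also have "\<eta> -` Fq = (\<lambda>c. (c - \<beta>) / \<alpha>) ` Fq"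
    unfolding \<eta>_def using \<alpha> by (auto simp: field_simps image_iff) 
  finally show ?thesis
    using card_image[of "\<lambda>c. (c - \<beta>) / \<alpha>" Fq] inj_onI[of Fq "\<lambda>c. (c - \<beta>) / \<alpha>"] \<alpha> finite_Fq by simp
qed

lemma card_Per_if_Per_eq_Fix:
  assumes "Per f = Fix f"
  shows "finite (Per f) \<and> card (Per f) \<le> degree \<phi>"
proof -
  define Q where "Q = \<phi> - [:0, 1:]"
  have "degree (- [:0, 1::'k:]) < degree \<phi>" using deg2 by simp
  then have dQ: "degree Q = degree \<phi>" unfolding Q_def diff_conv_add_uminus by (rule degree_add_eq_left)
  then have Q0: "Q \<noteq> 0" using deg2 by auto
  have "Fix f = {x. poly Q x = 0}" unfolding Fix_def Q_def by auto
  then show ?thesis using assms poly_roots_finite[OF Q0] card_poly_roots_bound[OF Q0] dQ by simp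
qed

end

theorem theorem2p11:
  fixes \<phi> :: "'k::field poly" and vinf :: "'k \<Rightarrow> int" and d q :: nat
  assumes K: "global_function_field TYPE('k)"
    and inf: "dval vinf"
    and q: "q = card (constant_field :: 'k set)"
    and coeffs: "\<forall>i. coeff \<phi> i \<in> ring_O vinf"
    and d: "d = degree \<phi>" "d \<ge> 2"
    and lc: "lead_coeff \<phi> \<in> ring_O vinf" "inverse (lead_coeff \<phi>) \<in> ring_O vinf"
  shows "(\<not> conj_to_poly_over constant_field \<phi> \<and> Per (poly \<phi>) \<noteq> Fix (poly \<phi>)
            \<and> \<not> two_cycles_condition (poly \<phi>)
            \<longrightarrow> finite (Per (poly \<phi>)) \<and> card (Per (poly \<phi>)) \<le> min d q)
       \<and> (conj_to_poly_over constant_field \<phi>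
            \<longrightarrow> finite (PrePer (poly \<phi>)) \<and> card (PrePer (poly \<phi>)) = q)
       \<and> (Per (poly \<phi>) = Fix (poly \<phi>)
            \<longrightarrow> finite (Per (poly \<phi>)) \<and> card (Per (poly \<phi>)) \<le> d)"
proof -
  interpret O_polynomial \<phi> vinf
    using K inf coeffs d lc by unfold_locales auto
  show ?thesis using card_Per_le card_PrePer_if_conj card_Per_if_Per_eq_Fix q d(1) by blast
qed

end
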